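(* Let $\rho$ be an $n$-qubit state positively represented under a frame function $F$, let $U$ be an $n$-qubit Clifford unitary with symplectic map $S$ and phase function $P$, and let $F'(\mathbf{a})=F(S^{-1}(\mathbf{a}))+P(S^{-1}(\mathbf{a}))$. Let $I\subseteq[n]$ be such that the map $q(\mathbf{a}_z)=F'(\mathbf{0}_x,\mathbf{a}_z)$, restricted to $Z_I=\{\mathbf{a}_z\in\mathbb{Z}_2^n: a_{iz}=0\ \forall i\notin I\}$, is a Boolean polynomial of degree at most $2$. Then there exist a linear subspace $V\subseteq Z_I$ with $\dim V\ge\lfloor(|I|+1)/2\rfloor$ and a vector $\mathbf{k}\in\mathbb{Z}_2^n$ with $q(\mathbf{a}_z)=\mathbf{k}\cdot\mathbf{a}_z$ for all $\mathbf{a}_z\in V$, such that for any basis $\mathbf{v}_1,\dots,\mathbf{v}_m$ of $V$ and any $\mathbf{c}\in\mathbb{Z}_2^m$, $$\Pr_{\mathbf{y}\sim p}\big[\mathbf{v}_j\cdot\mathbf{y}=c_j\ \forall j\big]=\sum_{\mathbf{u}:\ \mathbf{v}_j\cdot(S(\mathbf{u})_x+\mathbf{k})=c_j\ \forall j}W^F_\rho(\mathbf{u}).$$ In particular, at least $\lfloor(|I|+1)/2\rfloor$ linearly independent linear Boolean functions of the measurement outcomes on the qubits in $I$ can be jointly sampled exactly by drawing $\mathbf{u}\sim W^F_\rho$ and outputting $(\mathbf{v}_j\cdot(S(\mathbf{u})_x+\mathbf{k}))_{j=1}^m$.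
   Context: Let $n\ge 1$. Phase-space points are $\mathbf{u}=(\mathbf{u}_x,\mathbf{u}_z)=(u_{1x},\dots,u_{nx},u_{1z},\dots,u_{nz})\in\mathbb{Z}_2^{2n}$. For $\mathbf{a}\in\mathbb{Z}_2^{2n}$ let $T_{\mathbf{a}}=\bigotimes_{j=1}^n i^{a_{jx}a_{jz}}X^{a_{jx}}Z^{a_{jz}}$, where $X,Z$ are the single-qubit Pauli matrices. The symplectic product is $[\mathbf{u},\mathbf{a}]=\mathbf{u}_x\cdot\mathbf{a}_z+\mathbf{u}_z\cdot\mathbf{a}_x\pmod 2$. A frame function is any $F:\mathbb{Z}_2^{2n}\to\mathbb{Z}_2$ with $F(\mathbf{0})=0$. The phase point operator is $A^F(\mathbf{u})=2^{-n}\sum_{\mathbf{a}\in\mathbb{Z}_2^{2n}}(-1)^{[\mathbf{u},\mathbf{a}]+F(\mathbf{a})}T_{\mathbf{a}}$, and the framed Wigner function of an $n$-qubit density matrix $\rho$ is $W^F_\rho(\mathbf{u})=2^{-n}\mathrm{Tr}[\rho A^F(\mathbf{u})]$, so that $\rho=\sum_{\mathbf{u}}W^F_\rho(\mathbf{u})A^F(\mathbf{u})$. The state $\rho$ is positively represented under $F$ if $W^F_\rho(\mathbf{u})\ge 0$ for all $\mathbf{u}$. For an $n$-qubit Clifford unitary $U$ there are a linear bijection $S$ of $\mathbb{Z}_2^{2n}$ preserving $[\cdot,\cdot]$ and a function $P:\mathbb{Z}_2^{2n}\to\mathbb{Z}_2$ (the phase function) with $UT_{\mathbf{a}}U^\dagger=(-1)^{P(\mathbf{a})}T_{S(\mathbf{a})}$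 for all $\mathbf{a}$. $p(\mathbf{y})=\langle\mathbf{y}|U\rho U^\dagger|\mathbf{y}\rangle$ for $\mathbf{y}\in\mathbb{Z}_2^n$; $(\mathbf{0}_x,\mathbf{a}_z)$ is the point with $x$-part zero. *)

theory Defs
  imports Complex_Main "Jordan_Normal_Form.Schur_Decomposition"
begin

text \<open>An element of Z_2^n is a bool list of length n; True = 1, False = 0.
  Qubits are indexed 0,...,n-1.\<close>

definition bvecs :: "nat \<Rightarrow> bool list set" where
  "bvecs n = {x. length x = n}"

definition bzero :: "nat \<Rightarrow> bool list" where
  "bzero n = replicate n False"

definition bxor :: "bool list \<Rightarrow> bool list \<Rightarrow> bool list" where
  "bxor x y = map2 (\<noteq>) x y"

definition bdot :: "bool list \<Rightarrow> bool list \<Rightarrow> bool" where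
  "bdot x y = odd (card {i. i < length x \<and> i < length y \<and> x ! i \<and> y ! i})"

text \<open>Phase-space points u = (u_x, u_z) in Z_2^{2n}.\<close>
type_synonym point = "bool list \<times> bool list"

definition pts :: "nat \<Rightarrow> point set" where
  "pts n = bvecs n \<times> bvecs n"

definition pzero :: "nat \<Rightarrow> point" where
  "pzero n = (bzero n, bzero n)"

definition pxor :: "point \<Rightarrow> point \<Rightarrow> point" where
  "pxor u v = (bxor (fst u) (fst v), bxor (snd u) (snd v))"

definition symp :: "point \<Rightarrow> point \<Rightarrow> bool" where
  "symp u a = (bdot (fst u) (snd a) \<noteq> bdot (snd u) (fst a))"

definition sgn1 :: "bool \<Rightarrow> complex" where
  "sgn1 b = (if b then -1 else 1)"

text \<open>Computational basis: the basis vector |y\<rangle>, y \<in> Z_2^n, has index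
  idx y = \<Sum>_j y_j 2^(n-1-j) (qubit 0 is the most significant tensor factor).\<close>

definition idx :: "bool list \<Rightarrow> nat" where
  "idx y = (\<Sum>j<length y. if y ! j then 2 ^ (length y - 1 - j) else 0)"

definition qbit :: "nat \<Rightarrow> nat \<Rightarrow> nat \<Rightarrow> nat" where
  "qbit n r j = (if bit r (n - 1 - j) then 1 else 0)"

definition pauliX :: "complex mat" where
  "pauliX = mat_of_rows_list 2 [[0, 1], [1, 0]]"

definition pauliZ :: "complex mat" where
  "pauliZ = mat_of_rows_list 2 [[1, 0], [0, -1]]"

definition pauli1 :: "bool \<Rightarrow> bool \<Rightarrow> complex mat" where
  "pauli1 x z = (if x \<and> z then \<i> else 1) \<cdot>\<^sub>m
      ((if x then pauliX else 1\<^sub>m 2) * (if z then pauliZ else 1\<^sub>m 2))"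

text \<open>T_a = \<Otimes>_j i^{a_jx a_jz} X^{a_jx} Z^{a_jz}, written entrywise: the entry of a
  tensor product is the product of the entries of the factors.\<close>
definition pauliT :: "nat \<Rightarrow> point \<Rightarrow> complex mat" where
  "pauliT n a = mat (2 ^ n) (2 ^ n)
     (\<lambda>(r, c). \<Prod>j<n. pauli1 (fst a ! j) (snd a ! j) $$ (qbit n r j, qbit n c j))"

definition frame_function :: "nat \<Rightarrow> (point \<Rightarrow> bool) \<Rightarrow> bool" where
  "frame_function n F \<longleftrightarrow> F (pzero n) = False"

definition phase_point_op :: "nat \<Rightarrow> (point \<Rightarrow> bool) \<Rightarrow> point \<Rightarrow> complex mat" where
  "phase_point_op n F u = mat (2 ^ n) (2 ^ n)
     (\<lambda>ij. (1 / 2 ^ n) * (\<Sum>a\<in>pts n. sgn1 (symp u a \<noteq> F a) * pauliT n a $$ ij))"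

definition mtrace :: "complex mat \<Rightarrow> complex" where
  "mtrace A = (\<Sum>i<dim_row A. A $$ (i, i))"

definition wigner :: "nat \<Rightarrow> (point \<Rightarrow> bool) \<Rightarrow> complex mat \<Rightarrow> point \<Rightarrow> complex" where
  "wigner n F \<rho> u = (1 / 2 ^ n) * mtrace (\<rho> * phase_point_op n F u)"

text \<open>W is real for Hermitian \<rho>; "nonnegative" means real and nonnegative.\<close>
definition positively_represented :: "nat \<Rightarrow> (point \<Rightarrow> bool) \<Rightarrow> complex mat \<Rightarrow> bool" where
  "positively_represented n F \<rho> \<longleftrightarrow>
     (\<forall>u\<in>pts n. Im (wigner n F \<rho> u) = 0 \<and> 0 \<le> Re (wigner n F \<rho> u))"

definition density_matrix :: "nat \<Rightarrow> complex mat \<Rightarrow> bool" where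
  "density_matrix n \<rho> \<longleftrightarrow> \<rho> \<in> carrier_mat (2 ^ n) (2 ^ n) \<and> mat_adjoint \<rho> = \<rho> \<and>
     (\<forall>v \<in> carrier_vec (2 ^ n). 0 \<le> Re (conjugate v \<bullet> (\<rho> *\<^sub>v v))) \<and> mtrace \<rho> = 1"

definition unitary :: "nat \<Rightarrow> complex mat \<Rightarrow> bool" where
  "unitary n U \<longleftrightarrow> U \<in> carrier_mat (2 ^ n) (2 ^ n) \<and> U * mat_adjoint U = 1\<^sub>m (2 ^ n)"

definition clifford_data ::
  "nat \<Rightarrow> complex mat \<Rightarrow> (point \<Rightarrow> point) \<Rightarrow> (point \<Rightarrow> bool) \<Rightarrow> bool" where
  "clifford_data n U S P \<longleftrightarrow> unitary n U \<and>
     bij_betw S (pts n) (pts n) \<and>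
     (\<forall>a\<in>pts n. \<forall>b\<in>pts n. S (pxor a b) = pxor (S a) (S b)) \<and>
     (\<forall>a\<in>pts n. \<forall>b\<in>pts n. symp (S a) (S b) = symp a b) \<and>
     (\<forall>a\<in>pts n. U * pauliT n a * mat_adjoint U = sgn1 (P a) \<cdot>\<^sub>m pauliT n (S a))"

definition outcome_prob :: "nat \<Rightarrow> complex mat \<Rightarrow> complex mat \<Rightarrow> bool list \<Rightarrow> complex" where
  "outcome_prob n U \<rho> y = (U * \<rho> * mat_adjoint U) $$ (idx y, idx y)"

definition Z_I :: "nat \<Rightarrow> nat set \<Rightarrow> bool list set" where
  "Z_I n I = {z \<in> bvecs n. \<forall>i<n. i \<notin> I \<longrightarrow> \<not> z ! i}"

definition bsum :: "('a \<Rightarrow> bool) \<Rightarrow> 'a set \<Rightarrow> bool" where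
  "bsum f A = odd (card {x\<in>A. f x})"

definition bool_poly_deg_le2_on :: "nat \<Rightarrow> bool list set \<Rightarrow> (bool list \<Rightarrow> bool) \<Rightarrow> bool" where
  "bool_poly_deg_le2_on n D q \<longleftrightarrow>
     (\<exists>c0 (l :: nat \<Rightarrow> bool) (Q :: nat \<Rightarrow> nat \<Rightarrow> bool). \<forall>z\<in>D.
        q z = (c0 \<noteq> (bsum (\<lambda>i. l i \<and> z ! i) {..<n}
                \<noteq> bsum (\<lambda>(i, j). Q i j \<and> z ! i \<and> z ! j) {(i, j). i < j \<and> j < n})))"

definition bsubspace :: "nat \<Rightarrow> bool list set \<Rightarrow> bool" where
  "bsubspace n V \<longleftrightarrow> V \<subseteq> bvecs n \<and> bzero n \<in> V \<and> (\<forall>x\<in>V. \<forall>y\<in>V. bxor x y \<in> V)"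

definition lincomb :: "nat \<Rightarrow> bool list list \<Rightarrow> bool list \<Rightarrow> bool list" where
  "lincomb n vs c = foldr bxor (map (\<lambda>j. if c ! j then vs ! j else bzero n) [0..<length vs]) (bzero n)"

definition is_basis :: "nat \<Rightarrow> bool list set \<Rightarrow> bool list list \<Rightarrow> bool" where
  "is_basis n V vs \<longleftrightarrow> set vs \<subseteq> V \<and> bij_betw (lincomb n vs) (bvecs (length vs)) V"

end

theory Submission
  imports Defs
begin

text \<open>Conjugation by U turns the Wigner function of rho under F at u into that of U rho U^dagger
  under F' = (F + P) o S^-1 at S u. Summing it over the points whose x-part solves
  v_j . (x + k) = c_j leaves, by Fourier analysis on Z_2^n, only the Z-type Pauli expectations of
  U rho U^dagger on span(v_j), twisted by the signs (-1)^(F'(0, z) + k . z). Where F'(0, .) agrees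
  with z \<mapsto> k . z these signs disappear and the sum is the probability of the same constraints in
  the computational-basis measurement.

  Such a span exists because q = F'(0, .) is a Boolean quadratic form on Z_I with q(0) = 0: it is
  linear on every subspace that is isotropic for its polar form, and an isotropic subspace of
  dimension ceil(|I| / 2) is built greedily, since a new vector only has to satisfy 2k linear
  conditions inside the 2^|I| elements of Z_I.\<close>

lemma sgn1_simps [simp]: "sgn1 True = -1" "sgn1 False = 1"
  by (simp_all add: sgn1_def)

lemma sgn1_not [simp]: "sgn1 (\<not> a) = - sgn1 a"
  by (simp add: sgn1_def)

lemma sgn1_xor: "sgn1 (a \<noteq> b) = sgn1 a * sgn1 b"
  by (simp add: sgn1_def)

lemma mem_bvecs_iff [simp]: "x \<in> bvecs n \<longleftrightarrow> length x = n"
  by (simp add: bvecs_def)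

lemma length_bzero [simp]: "length (bzero n) = n"
  by (simp add: bzero_def)

lemma nth_bzero [simp]: "i < n \<Longrightarrow> bzero n ! i = False"
  by (simp add: bzero_def)

lemma bzero_0 [simp]: "bzero 0 = []"
  by (simp add: bzero_def)

lemma bzero_Suc: "bzero (Suc n) = False # bzero n"
  by (simp add: bzero_def)

lemma bxor_Nil [simp]: "bxor [] y = []" "bxor x [] = []"
  by (simp_all add: bxor_def)

lemma bxor_Cons [simp]: "bxor (a # x) (b # y) = (a \<noteq> b) # bxor x y"
  by (simp add: bxor_def)

lemma length_bxor [simp]: "length (bxor x y) = min (length x) (length y)"
  by (simp add: bxor_def)

lemma nth_bxor [simp]: "i < length x \<Longrightarrow> i < length y \<Longrightarrow> bxor x y ! i = (x ! i \<noteq> y ! i)"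
  by (simp add: bxor_def)

lemma bxor_assoc: "bxor (bxor x y) z = bxor x (bxor y z)"
proof (induction x arbitrary: y z)
  case (Cons a x)
  then show ?case by (cases y; cases z) auto
qed simp

lemma bxor_self: "bxor x x = bzero (length x)"
  by (induction x) (auto simp: bzero_Suc)

lemma bxor_bzero: "length x = n \<Longrightarrow> bxor x (bzero n) = x" "length x = n \<Longrightarrow> bxor (bzero n) x = x"
  by (induction x arbitrary: n) (auto simp: bzero_Suc)

lemma bxor_eq_bzero_iff: "length x = length y \<Longrightarrow> bxor x y = bzero (length x) \<longleftrightarrow> x = y"
  by (induction x y rule: list_induct2) (auto simp: bzero_Suc)

lemma bdot_Nil [simp]: "bdot [] y = False" "bdot x [] = False"
  by (simp_all add: bdot_def)

lemma bdot_Cons [simp]: "bdot (a # x) (b # y) = ((a \<and> b) \<noteq> bdot x y)"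
proof -
  let ?A = "{i. i < length x \<and> i < length y \<and> x ! i \<and> y ! i}"
  let ?H = "{i. i = 0 \<and> a \<and> b}"
  have split: "{i. i < length (a # x) \<and> i < length (b # y) \<and> (a # x) ! i \<and> (b # y) ! i}
      = ?H \<union> Suc ` ?A"
    unfolding set_eq_iff
  proof
    fix i show "i \<in> {i. i < length (a # x) \<and> i < length (b # y) \<and> (a # x) ! i \<and> (b # y) ! i}
      \<longleftrightarrow> i \<in> ?H \<union> Suc ` ?A"
      by (cases i) (auto simp: image_iff)
  qed
  have "card (?H \<union> Suc ` ?A) = (if a \<and> b then 1 else 0) + card ?A"
  proof (cases "a \<and> b")
    case True
    then have "?H \<union> Suc ` ?A = insert 0 (Suc ` ?A)" by auto
    with True show ?thesis by (simp add: card_image)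
  next
    case False
    then have "?H \<union> Suc ` ?A = Suc ` ?A" by auto
    with False show ?thesis by (simp add: card_image)
  qed
  then show ?thesis
    unfolding bdot_def split by auto
qed

lemma bdot_comm: "bdot x y = bdot y x"
proof -
  have "{i. i < length x \<and> i < length y \<and> x ! i \<and> y ! i} = {i. i < length y \<and> i < length x \<and> y ! i \<and> x ! i}"
    by auto
  then show ?thesis
    unfolding bdot_def by simp
qed

lemma bdot_all_False: "\<forall>i<length y. \<not> y ! i \<Longrightarrow> bdot x y = False"
proof -
  assume "\<forall>i<length y. \<not> y ! i"
  then have empty: "{i. i < length x \<and> i < length y \<and> x ! i \<and> y ! i} = {}"
    by blast
  show ?thesis
    unfolding bdot_def empty by simp
qed

lemma bdot_bzero [simp]: "bdot x (bzero n) = False" "bdot (bzero n) x = False"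
  using bdot_all_False[of "bzero n"] bdot_comm[of x "bzero n"] by simp_all

lemma bdot_bxor:
  "length x = length y \<Longrightarrow> length y = length z \<Longrightarrow> bdot x (bxor y z) = (bdot x y \<noteq> bdot x z)"
  by (induction x y z rule: list_induct3) auto

lemma bdot_indicator: "j < length y \<Longrightarrow> bdot (map (\<lambda>i. i = j) [0..<length y]) y = y ! j"
proof -
  assume j: "j < length y"
  have "{i. i < length (map (\<lambda>i. i = j) [0..<length y]) \<and> i < length y \<and>
           map (\<lambda>i. i = j) [0..<length y] ! i \<and> y ! i} = (if y ! j then {j} else {})"
    using j by auto
  then show ?thesis
    unfolding bdot_def by simp
qed

lemma bvecs_Suc: "bvecs (Suc n) = (\<lambda>(b, x). b # x) ` (UNIV \<times> bvecs n)"
  by (auto simp: image_iff length_Suc_conv)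

lemma inj_on_Cons_pair: "inj_on (\<lambda>(b, x). b # x) A"
  by (auto simp: inj_on_def)

lemma bvecs_0: "bvecs 0 = {[]}"
  by auto

lemma finite_bvecs [simp]: "finite (bvecs n)"
  by (induction n) (simp_all add: bvecs_0 bvecs_Suc)

lemma card_bvecs: "card (bvecs n) = 2 ^ n"
proof (induction n)
  case 0
  then show ?case by (simp add: bvecs_0)
next
  case (Suc n)
  then show ?case
    unfolding bvecs_Suc card_image[OF inj_on_Cons_pair] card_cartesian_product by simp
qed

lemma sum_bvecs_Suc:
  "(\<Sum>x\<in>bvecs (Suc n). f x) = (\<Sum>x\<in>bvecs n. f (True # x)) + (\<Sum>x\<in>bvecs n. f (False # x))"
proof -
  have "(\<Sum>x\<in>bvecs (Suc n). f x) = (\<Sum>(b, x)\<in>UNIV \<times> bvecs n. f (b # x))"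
    unfolding bvecs_Suc by (subst sum.reindex[OF inj_on_Cons_pair]) (simp add: case_prod_beta)
  also have "\<dots> = (\<Sum>b\<in>UNIV. \<Sum>x\<in>bvecs n. f (b # x))"
    by (rule sum.cartesian_product[symmetric])
  finally show ?thesis
    by (simp add: UNIV_bool add.commute)
qed

lemma sum_sgn1_bdot:
  "z \<in> bvecs n \<Longrightarrow> (\<Sum>x\<in>bvecs n. sgn1 (bdot x z)) = (if z = bzero n then 2 ^ n else 0)"
proof (induction n arbitrary: z)
  case 0
  then show ?case by (simp add: bvecs_0)
next
  case (Suc n)
  then obtain c z' where z: "z = c # z'" "z' \<in> bvecs n"
    by (cases z) auto
  show ?case
    using Suc.IH[OF z(2)] unfolding sum_bvecs_Suc z(1)
    by (cases c) (auto simp: sgn1_xor sum_negf bzero_Suc)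
qed

lemma sum_sgn1_bdot_orthogonal:
  assumes "y \<in> bvecs n" "z \<in> bvecs n"
  shows "(\<Sum>x\<in>bvecs n. sgn1 (bdot x y) * sgn1 (bdot x z)) = (if y = z then 2 ^ n else 0)"
proof -
  have "(\<Sum>x\<in>bvecs n. sgn1 (bdot x y) * sgn1 (bdot x z)) = (\<Sum>x\<in>bvecs n. sgn1 (bdot x (bxor y z)))"
    using assms by (intro sum.cong refl) (simp add: bdot_bxor sgn1_def)
  also have "\<dots> = (if y = z then 2 ^ n else 0)"
    using assms sum_sgn1_bdot[of "bxor y z" n] bxor_eq_bzero_iff[of y z] by simp
  finally show ?thesis .
qed

definition blinear :: "nat \<Rightarrow> (bool list \<Rightarrow> bool) \<Rightarrow> bool" where
  "blinear n f \<longleftrightarrow> (\<forall>x\<in>bvecs n. \<forall>y\<in>bvecs n. f (bxor x y) = (f x \<noteq> f y))"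

lemma blinear_bzero: "blinear n f \<Longrightarrow> f (bzero n) = False"
  unfolding blinear_def by (metis bxor_self length_bzero mem_bvecs_iff)

lemma blinear_bdot: "length k = n \<Longrightarrow> blinear n (bdot k)"
  unfolding blinear_def by (simp add: bdot_bxor)

lemma blinear_nth: "p < n \<Longrightarrow> blinear n (\<lambda>x. x ! p)"
  unfolding blinear_def by simp

lemma lincomb_Nil [simp]: "lincomb n [] t = bzero n"
  by (simp add: lincomb_def)

lemma lincomb_Cons [simp]:
  "lincomb n (v # vs) (b # t) = bxor (if b then v else bzero n) (lincomb n vs t)"
proof -
  have upt: "[0..<length (v # vs)] = 0 # map Suc [0..<length vs]"
    by (simp add: map_Suc_upt upt_conv_Cons del: upt_Suc)
  have terms: "map (\<lambda>j. if (b # t) ! j then (v # vs) ! j else bzero n) (0 # map Suc [0..<length vs])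
     = (if b then v else bzero n) # map (\<lambda>j. if t ! j then vs ! j else bzero n) [0..<length vs]"
    by simp
  show ?thesis
    unfolding lincomb_def upt terms by simp
qed

lemma length_lincomb [simp]:
  "set vs \<subseteq> bvecs n \<Longrightarrow> length t = length vs \<Longrightarrow> length (lincomb n vs t) = n"
proof (induction vs arbitrary: t)
  case (Cons v vs)
  then show ?case by (cases t) auto
qed simp

lemma lincomb_in_bsubspace:
  assumes W: "bsubspace n W" and "set vs \<subseteq> W" "length t = length vs"
  shows "lincomb n vs t \<in> W"
  using assms(2,3)
proof (induction vs arbitrary: t)
  case Nil
  then show ?case using W unfolding bsubspace_def by simp
next
  case (Cons v vs)
  then show ?case using W unfolding bsubspace_def by (cases t) auto
qed

lemma blinear_lincomb:
  assumes "blinear n f" "set vs \<subseteq> bvecs n" "length t = length vs"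
  shows "f (lincomb n vs t) = bdot t (map f vs)"
  using assms(2,3)
proof (induction vs arbitrary: t)
  case Nil
  then show ?case using blinear_bzero[OF assms(1)] by simp
next
  case (Cons v vs)
  then obtain b t' where t: "t = b # t'" "length t' = length vs"
    by (cases t) auto
  have "f (lincomb n (v # vs) t) = (f (if b then v else bzero n) \<noteq> f (lincomb n vs t'))"
    using assms(1) Cons.prems t unfolding blinear_def by simp
  then show ?case
    using Cons t blinear_bzero[OF assms(1)] by simp
qed

lemma lincomb_bxor:
  assumes vs: "set vs \<subseteq> bvecs n" and t: "length t = length vs" and t': "length t' = length vs"
  shows "bxor (lincomb n vs t) (lincomb n vs t') = lincomb n vs (bxor t t')"
proof (rule nth_equalityI)
  show "length (bxor (lincomb n vs t) (lincomb n vs t')) = length (lincomb n vs (bxor t t'))"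
    using assms by simp
  fix r assume "r < length (bxor (lincomb n vs t) (lincomb n vs t'))"
  then have r: "r < n" using assms by simp
  let ?m = "map (\<lambda>x. x ! r) vs"
  have coord: "lincomb n vs s ! r = bdot ?m s" if "length s = length vs" for s
    using blinear_lincomb[OF blinear_nth[OF r] vs that] by (simp add: bdot_comm)
  show "bxor (lincomb n vs t) (lincomb n vs t') ! r = lincomb n vs (bxor t t') ! r"
    using r vs t t' coord[of t] coord[of t'] coord[of "bxor t t'"] by (simp add: bdot_bxor)
qed

lemma lincomb_bzero: "set vs \<subseteq> bvecs n \<Longrightarrow> lincomb n vs (bzero (length vs)) = bzero n"
proof (induction vs)
  case (Cons v vs)
  then show ?case by (simp add: bzero_Suc bxor_bzero)
qed simp

definition has_pivots :: "nat \<Rightarrow> bool list list \<Rightarrow> nat list \<Rightarrow> bool" where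
  "has_pivots n vs ps \<longleftrightarrow> length ps = length vs \<and> set vs \<subseteq> bvecs n \<and> (\<forall>p\<in>set ps. p < n) \<and>
     (\<forall>i<length vs. \<forall>j<length vs. vs ! i ! (ps ! j) = (i = j))"

lemma lincomb_nth_pivot:
  assumes "has_pivots n vs ps" "length t = length vs" "j < length vs"
  shows "lincomb n vs t ! (ps ! j) = t ! j"
proof -
  have ps: "length ps = length vs" "ps ! j < n" "set vs \<subseteq> bvecs n"
    using assms unfolding has_pivots_def by auto
  have "lincomb n vs t ! (ps ! j) = bdot t (map (\<lambda>x. x ! (ps ! j)) vs)"
    using blinear_lincomb[OF blinear_nth[OF ps(2)] ps(3) assms(2)] .
  also have "map (\<lambda>x. x ! (ps ! j)) vs = map (\<lambda>i. i = j) [0..<length t]"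
    using assms unfolding has_pivots_def by (intro nth_equalityI) auto
  finally show ?thesis
    using bdot_indicator[of j t] assms(2,3) by (simp add: bdot_comm)
qed

lemma lincomb_indicator:
  assumes "set vs \<subseteq> bvecs n" "j < length vs"
  shows "lincomb n vs (map (\<lambda>i. i = j) [0..<length vs]) = vs ! j"
proof (rule nth_equalityI)
  have len: "length (vs ! j) = n"
    using assms nth_mem by fastforce
  then show "length (lincomb n vs (map (\<lambda>i. i = j) [0..<length vs])) = length (vs ! j)"
    using assms by simp
  fix r assume "r < length (lincomb n vs (map (\<lambda>i. i = j) [0..<length vs]))"
  then have r: "r < n" using assms by simp
  have "lincomb n vs (map (\<lambda>i. i = j) [0..<length vs]) ! r
      = bdot (map (\<lambda>i. i = j) [0..<length vs]) (map (\<lambda>x. x ! r) vs)"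
    using blinear_lincomb[OF blinear_nth[OF r] assms(1)] by simp
  also have "\<dots> = vs ! j ! r"
    using bdot_indicator[of j "map (\<lambda>x. x ! r) vs"] assms(2) by simp
  finally show "lincomb n vs (map (\<lambda>i. i = j) [0..<length vs]) ! r = vs ! j ! r" .
qed

lemma is_basis_pivots:
  assumes "has_pivots n vs ps"
  shows "bsubspace n (lincomb n vs ` bvecs (length vs))"
    and "is_basis n (lincomb n vs ` bvecs (length vs)) vs"
proof -
  let ?V = "lincomb n vs ` bvecs (length vs)"
  have vs: "set vs \<subseteq> bvecs n"
    using assms unfolding has_pivots_def by simp
  show "bsubspace n ?V"
    unfolding bsubspace_def
  proof (intro conjI ballI)
    show "?V \<subseteq> bvecs n" using vs by auto
    show "bzero n \<in> ?V"
      using lincomb_bzero[OF vs] by (metis image_eqI length_bzero mem_bvecs_iff)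
    fix x y assume "x \<in> ?V" "y \<in> ?V"
    then obtain t t' where "t \<in> bvecs (length vs)" "t' \<in> bvecs (length vs)"
      "x = lincomb n vs t" "y = lincomb n vs t'"
      by blast
    then show "bxor x y \<in> ?V"
      using lincomb_bxor[OF vs, of t t'] by simp
  qed
  have "set vs \<subseteq> ?V"
  proof
    fix v assume "v \<in> set vs"
    then obtain j where "j < length vs" "v = vs ! j"
      by (auto simp: in_set_conv_nth)
    then show "v \<in> ?V"
      using lincomb_indicator[OF vs] by (metis image_eqI length_map length_upt mem_bvecs_iff minus_nat.diff_0)
  qed
  moreover have "inj_on (lincomb n vs) (bvecs (length vs))"
  proof (rule inj_onI)
    fix t t' assume t: "t \<in> bvecs (length vs)" and t': "t' \<in> bvecs (length vs)"
      and eq: "lincomb n vs t = lincomb n vs t'"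
    show "t = t'"
    proof (rule nth_equalityI)
      show "length t = length t'" using t t' by simp
      fix j assume "j < length t"
      then show "t ! j = t' ! j"
        using lincomb_nth_pivot[OF assms, of t j] lincomb_nth_pivot[OF assms, of t' j] t t' eq by simp
    qed
  qed
  ultimately show "is_basis n ?V vs"
    unfolding is_basis_def by (simp add: inj_on_imp_bij_betw)
qed

lemma exists_bdot_pivots:
  assumes "has_pivots n vs ps"
  obtains k where "k \<in> bvecs n" "\<And>j. j < length vs \<Longrightarrow> bdot k (vs ! j) = g j"
proof
  define k where "k = map (\<lambda>i. \<exists>j<length vs. ps ! j = i \<and> g j) [0..<n]"
  show "k \<in> bvecs n"
    unfolding k_def by simp
  fix l assume l: "l < length vs"
  have piv: "length ps = length vs" "\<forall>p\<in>set ps. p < n"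
    "\<forall>i<length vs. \<forall>j<length vs. vs ! i ! (ps ! j) = (i = j)"
    using assms unfolding has_pivots_def by auto
  have len: "length (vs ! l) = n"
    using assms l nth_mem unfolding has_pivots_def by fastforce
  have "{i. i < length k \<and> i < length (vs ! l) \<and> k ! i \<and> vs ! l ! i} = (if g l then {ps ! l} else {})"
    (is "?L = ?R")
  proof (rule Set.set_eqI)
    fix i
    show "i \<in> ?L \<longleftrightarrow> i \<in> ?R"
    proof
      assume "i \<in> ?L"
      then have i: "i < n" "k ! i" "vs ! l ! i"
        using len unfolding k_def by auto
      then obtain j where j: "j < length vs" "ps ! j = i" "g j"
        unfolding k_def by auto
      then have "j = l"
        using piv(3) l i(3) by auto
      then show "i \<in> ?R"
        using j by simp
    next
      assume "i \<in> ?R"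
      then have "g l" "i = ps ! l"
        by (auto split: if_splits)
      moreover have "ps ! l < n"
        using piv(1,2) l by simp
      ultimately show "i \<in> ?L"
        using piv(3) l len unfolding k_def by auto
    qed
  qed
  then show "bdot k (vs ! l) = g l"
    unfolding bdot_def by simp
qed

lemma bsubspace_Z_I: "bsubspace n (Z_I n I)"
  unfolding bsubspace_def Z_I_def by auto

lemma card_Z_I:
  assumes "I \<subseteq> {..<n}"
  shows "card (Z_I n I) = 2 ^ card I"
proof -
  let ?enc = "\<lambda>S. map (\<lambda>i. i \<in> S) [0..<n]"
  have "bij_betw ?enc (Pow I) (Z_I n I)"
  proof (rule bij_betw_imageI)
    show "inj_on ?enc (Pow I)"
    proof (rule inj_onI)
      fix S T assume S: "S \<in> Pow I" and T: "T \<in> Pow I" and eq: "?enc S = ?enc T"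
      have "i \<in> S \<longleftrightarrow> i \<in> T" if "i < n" for i
        using arg_cong[OF eq, of "\<lambda>xs. xs ! i"] that by simp
      then show "S = T"
        using S T assms by blast
    qed
    show "?enc ` Pow I = Z_I n I"
    proof (rule Set.set_eqI)
      fix z
      show "z \<in> ?enc ` Pow I \<longleftrightarrow> z \<in> Z_I n I"
      proof
        assume "z \<in> ?enc ` Pow I"
        then show "z \<in> Z_I n I" by (auto simp: Z_I_def)
      next
        assume z: "z \<in> Z_I n I"
        then have "z = ?enc {i\<in>I. z ! i}"
          by (intro nth_equalityI) (auto simp: Z_I_def)
        then show "z \<in> ?enc ` Pow I" by blast
      qed
    qed
  qed
  then have "card (Z_I n I) = card (Pow I)"
    by (simp add: bij_betw_same_card)
  then show ?thesis
    using assms finite_subset[of I "{..<n}"] by (simp add: card_Pow)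
qed

lemma bsubspace_kernel:
  assumes W: "bsubspace n W" and f: "blinear n f"
  shows "bsubspace n {x\<in>W. \<not> f x}"
  unfolding bsubspace_def
proof (intro conjI ballI)
  have sub: "W \<subseteq> bvecs n"
    using W unfolding bsubspace_def by simp
  then show "{x\<in>W. \<not> f x} \<subseteq> bvecs n" by blast
  show "bzero n \<in> {x\<in>W. \<not> f x}"
    using W blinear_bzero[OF f] unfolding bsubspace_def by simp
  fix x y assume x: "x \<in> {x\<in>W. \<not> f x}" and y: "y \<in> {x\<in>W. \<not> f x}"
  then have "f (bxor x y) = False"
    using f sub unfolding blinear_def by auto
  then show "bxor x y \<in> {x\<in>W. \<not> f x}"
    using W x y unfolding bsubspace_def by simp
qed

lemma bsubspace_joint_kernel:
  assumes "bsubspace n W" "\<forall>f\<in>set fs. blinear n f"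
  shows "bsubspace n {x\<in>W. \<forall>f\<in>set fs. \<not> f x}"
  using assms(2)
proof (induction fs)
  case Nil
  then show ?case using assms(1) by simp
next
  case (Cons g fs)
  have kernel_Cons: "{x\<in>W. \<forall>f\<in>set (g # fs). \<not> f x} = {x\<in>{x\<in>W. \<forall>f\<in>set fs. \<not> f x}. \<not> g x}"
    by auto
  show ?case
    unfolding kernel_Cons by (rule bsubspace_kernel) (use Cons in auto)
qed

text \<open>Translation by an element outside the kernel maps the complement of the kernel
  injectively into the kernel.\<close>

lemma card_le_twice_kernel:
  assumes W: "bsubspace n W" and f: "blinear n f"
  shows "card W \<le> 2 * card {x\<in>W. \<not> f x}"
proof (cases "\<exists>x0\<in>W. f x0")
  case True
  then obtain x0 where x0: "x0 \<in> W" "f x0" by blast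
  have sub: "W \<subseteq> bvecs n" and closed: "\<forall>x\<in>W. \<forall>y\<in>W. bxor x y \<in> W"
    using W unfolding bsubspace_def by auto
  have fin: "finite W"
    using sub by (rule finite_subset) simp
  have cancel: "bxor x0 (bxor x0 x) = x" if "x \<in> W" for x
  proof -
    have "x0 \<in> bvecs n" "x \<in> bvecs n"
      using that x0(1) sub by blast+
    then show ?thesis
      by (simp add: bxor_assoc[symmetric] bxor_self bxor_bzero)
  qed
  have "inj_on (bxor x0) {x\<in>W. f x}"
  proof (rule inj_onI)
    fix a b assume a: "a \<in> {x\<in>W. f x}" and b: "b \<in> {x\<in>W. f x}" and eq: "bxor x0 a = bxor x0 b"
    have "a = bxor x0 (bxor x0 a)" using a cancel by simp
    also have "\<dots> = b" using b cancel eq by simp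
    finally show "a = b" .
  qed
  moreover have "bxor x0 ` {x\<in>W. f x} \<subseteq> {x\<in>W. \<not> f x}"
  proof
    fix y assume "y \<in> bxor x0 ` {x\<in>W. f x}"
    then obtain x where x: "x \<in> W" "f x" "y = bxor x0 x" by blast
    have "f y = (f x0 \<noteq> f x)"
      using f x(1,3) x0(1) sub unfolding blinear_def by blast
    then show "y \<in> {x\<in>W. \<not> f x}"
      using x x0 closed by simp
  qed
  ultimately have "card {x\<in>W. f x} \<le> card {x\<in>W. \<not> f x}"
    using fin by (intro card_inj_on_le) auto
  moreover have "card W = card {x\<in>W. f x} + card {x\<in>W. \<not> f x}"
  proof -
    have "W = {x\<in>W. f x} \<union> {x\<in>W. \<not> f x}" by blast
    moreover have "card ({x\<in>W. f x} \<union> {x\<in>W. \<not> f x}) = card {x\<in>W. f x} + card {x\<in>W. \<not> f x}"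
      using fin by (intro card_Un_disjoint) auto
    ultimately show ?thesis by simp
  qed
  ultimately show ?thesis by simp
next
  case False
  then have "{x\<in>W. \<not> f x} = W" by blast
  then show ?thesis by simp
qed

lemma card_le_joint_kernel:
  assumes "bsubspace n W" "\<forall>f\<in>set fs. blinear n f"
  shows "card W \<le> 2 ^ length fs * card {x\<in>W. \<forall>f\<in>set fs. \<not> f x}"
  using assms(2)
proof (induction fs)
  case Nil
  then show ?case by simp
next
  case (Cons g fs)
  let ?K = "{x\<in>W. \<forall>f\<in>set fs. \<not> f x}"
  have "card ?K \<le> 2 * card {x\<in>?K. \<not> g x}"
    by (rule card_le_twice_kernel[OF bsubspace_joint_kernel[OF assms(1)]]) (use Cons.prems in auto)
  also have "{x\<in>?K. \<not> g x} = {x\<in>W. \<forall>f\<in>set (g # fs). \<not> f x}"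
    by auto
  finally have "2 ^ length fs * card ?K \<le> 2 ^ length fs * (2 * card {x\<in>W. \<forall>f\<in>set (g # fs). \<not> f x})"
    by (rule mult_le_mono2)
  moreover have "card W \<le> 2 ^ length fs * card ?K"
    using Cons by simp
  ultimately have "card W \<le> 2 ^ length fs * (2 * card {x\<in>W. \<forall>f\<in>set (g # fs). \<not> f x})"
    by linarith
  then show ?case
    by (simp add: ac_simps)
qed

lemma exists_nonzero_joint_kernel:
  assumes W: "bsubspace n W" and fs: "\<forall>f\<in>set fs. blinear n f" and card: "2 ^ length fs < card W"
  obtains x p where "x \<in> W" "\<forall>f\<in>set fs. \<not> f x" "p < n" "x ! p"
proof -
  let ?K = "{x\<in>W. \<forall>f\<in>set fs. \<not> f x}"
  have "\<not> card ?K \<le> 1"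
  proof
    assume "card ?K \<le> 1"
    then have "2 ^ length fs * card ?K \<le> 2 ^ length fs"
      using mult_le_mono2[of "card ?K" 1 "2 ^ length fs"] by simp
    then show False
      using card card_le_joint_kernel[OF W fs] by linarith
  qed
  then have "\<not> ?K \<subseteq> {bzero n}"
    using card_mono[of "{bzero n}" ?K] by auto
  then obtain x where x: "x \<in> W" "\<forall>f\<in>set fs. \<not> f x" "x \<noteq> bzero n"
    by blast
  have "length x = n"
    using x(1) W unfolding bsubspace_def by auto
  then have "\<exists>p<n. x ! p"
    using x(3) nth_equalityI[of x "bzero n"] by auto
  then show ?thesis
    using that x(1,2) by blast
qed

subsection \<open>Quadratic forms over Z_2\<close>

lemma bsum_cong: "(\<And>x. x \<in> A \<Longrightarrow> f x = g x) \<Longrightarrow> bsum f A = bsum g A"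
  unfolding bsum_def by (metis (mono_tags, lifting) Collect_cong)

lemma bsum_False [simp]: "bsum (\<lambda>x. False) A = False"
  by (simp add: bsum_def)

lemma bsum_xor: "finite A \<Longrightarrow> bsum (\<lambda>x. f x \<noteq> g x) A = (bsum f A \<noteq> bsum g A)"
proof -
  assume fin: "finite A"
  let ?FG = "{x\<in>A. f x \<and> g x}" and ?F = "{x\<in>A. f x \<and> \<not> g x}" and ?G = "{x\<in>A. \<not> f x \<and> g x}"
  have "{x\<in>A. f x} = ?FG \<union> ?F" "{x\<in>A. g x} = ?FG \<union> ?G" "{x\<in>A. f x \<noteq> g x} = ?F \<union> ?G"
    by blast+
  moreover have "card (?FG \<union> ?F) = card ?FG + card ?F" "card (?FG \<union> ?G) = card ?FG + card ?G"
      "card (?F \<union> ?G) = card ?F + card ?G"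
    using fin by (intro card_Un_disjoint; auto)+
  ultimately show ?thesis
    unfolding bsum_def by auto
qed

definition pairs :: "nat \<Rightarrow> (nat \<times> nat) set" where
  "pairs n = {(i, j). i < j \<and> j < n}"

lemma finite_pairs [simp]: "finite (pairs n)"
  by (rule finite_subset[of _ "{..<n} \<times> {..<n}"]) (auto simp: pairs_def)

definition lin_form :: "nat \<Rightarrow> (nat \<Rightarrow> bool) \<Rightarrow> bool list \<Rightarrow> bool" where
  "lin_form n l x = bsum (\<lambda>i. l i \<and> x ! i) {..<n}"

definition quad_form :: "nat \<Rightarrow> (nat \<Rightarrow> nat \<Rightarrow> bool) \<Rightarrow> bool list \<Rightarrow> bool" where
  "quad_form n Q x = bsum (\<lambda>(i, j). Q i j \<and> x ! i \<and> x ! j) (pairs n)"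

definition polar_form :: "nat \<Rightarrow> (nat \<Rightarrow> nat \<Rightarrow> bool) \<Rightarrow> bool list \<Rightarrow> bool list \<Rightarrow> bool" where
  "polar_form n Q x y = bsum (\<lambda>(i, j). Q i j \<and> ((x ! i \<and> y ! j) \<noteq> (x ! j \<and> y ! i))) (pairs n)"

lemma bool_poly_deg_le2_onE:
  assumes "bool_poly_deg_le2_on n D q"
  obtains c0 l Q where "\<And>z. z \<in> D \<Longrightarrow> q z = (c0 \<noteq> (lin_form n l z \<noteq> quad_form n Q z))"
  using assms unfolding bool_poly_deg_le2_on_def lin_form_def quad_form_def pairs_def by blast

lemma lin_form_bzero [simp]: "lin_form n l (bzero n) = False"
proof -
  have "lin_form n l (bzero n) = bsum (\<lambda>i. False) {..<n}"
    unfolding lin_form_def by (rule bsum_cong) simp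
  then show ?thesis by simp
qed

lemma quad_form_bzero [simp]: "quad_form n Q (bzero n) = False"
proof -
  have "quad_form n Q (bzero n) = bsum (\<lambda>p. False) (pairs n)"
    unfolding quad_form_def by (rule bsum_cong) (auto simp: pairs_def)
  then show ?thesis by simp
qed

lemma lin_form_bxor:
  assumes "x \<in> bvecs n" "y \<in> bvecs n"
  shows "lin_form n l (bxor x y) = (lin_form n l x \<noteq> lin_form n l y)"
proof -
  have "lin_form n l (bxor x y) = bsum (\<lambda>i. (l i \<and> x ! i) \<noteq> (l i \<and> y ! i)) {..<n}"
    unfolding lin_form_def using assms by (intro bsum_cong) auto
  then show ?thesis
    unfolding lin_form_def by (simp only: bsum_xor[OF finite_lessThan])
qed

lemma quad_form_bxor:
  assumes "x \<in> bvecs n" "y \<in> bvecs n"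
  shows "quad_form n Q (bxor x y) = (quad_form n Q x \<noteq> (quad_form n Q y \<noteq> polar_form n Q x y))"
proof -
  have "quad_form n Q (bxor x y) = bsum (\<lambda>p. (case p of (i, j) \<Rightarrow> Q i j \<and> x ! i \<and> x ! j)
      \<noteq> ((case p of (i, j) \<Rightarrow> Q i j \<and> y ! i \<and> y ! j) \<noteq>
         (case p of (i, j) \<Rightarrow> Q i j \<and> ((x ! i \<and> y ! j) \<noteq> (x ! j \<and> y ! i))))) (pairs n)"
    unfolding quad_form_def using assms by (intro bsum_cong) (auto simp: pairs_def)
  then show ?thesis
    unfolding quad_form_def polar_form_def by (simp only: bsum_xor[OF finite_pairs])
qed

lemma polar_form_bxor_left:
  assumes "x \<in> bvecs n" "y \<in> bvecs n" "z \<in> bvecs n"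
  shows "polar_form n Q (bxor x y) z = (polar_form n Q x z \<noteq> polar_form n Q y z)"
proof -
  have "polar_form n Q (bxor x y) z = bsum (\<lambda>p.
        (case p of (i, j) \<Rightarrow> Q i j \<and> ((x ! i \<and> z ! j) \<noteq> (x ! j \<and> z ! i)))
      \<noteq> (case p of (i, j) \<Rightarrow> Q i j \<and> ((y ! i \<and> z ! j) \<noteq> (y ! j \<and> z ! i)))) (pairs n)"
    unfolding polar_form_def using assms by (intro bsum_cong) (auto simp: pairs_def)
  then show ?thesis
    unfolding polar_form_def by (simp only: bsum_xor[OF finite_pairs])
qed

lemma polar_form_comm: "polar_form n Q x y = polar_form n Q y x"
  unfolding polar_form_def by (intro bsum_cong) auto

lemma polar_form_self [simp]: "polar_form n Q x x = False"
proof -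
  have "polar_form n Q x x = bsum (\<lambda>p. False) (pairs n)"
    unfolding polar_form_def by (intro bsum_cong) auto
  then show ?thesis by simp
qed

lemma polar_form_bzero [simp]: "polar_form n Q x (bzero n) = False"
proof -
  have "polar_form n Q x (bzero n) = bsum (\<lambda>p. False) (pairs n)"
    unfolding polar_form_def by (intro bsum_cong) (auto simp: pairs_def)
  then show ?thesis by simp
qed

lemma blinear_polar_form: "v \<in> bvecs n \<Longrightarrow> blinear n (\<lambda>x. polar_form n Q x v)"
  unfolding blinear_def by (simp add: polar_form_bxor_left)

definition isotropic :: "nat \<Rightarrow> (nat \<Rightarrow> nat \<Rightarrow> bool) \<Rightarrow> bool list list \<Rightarrow> bool" where
  "isotropic n Q vs \<longleftrightarrow> (\<forall>v\<in>set vs. \<forall>w\<in>set vs. \<not> polar_form n Q v w)"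

lemma quad_poly_lincomb_isotropic:
  assumes "isotropic n Q vs" "set vs \<subseteq> bvecs n" "length t = length vs"
  shows "(lin_form n l (lincomb n vs t) \<noteq> quad_form n Q (lincomb n vs t))
       = bdot t (map (\<lambda>z. lin_form n l z \<noteq> quad_form n Q z) vs)"
  using assms
proof (induction vs arbitrary: t)
  case Nil
  then show ?case by simp
next
  case (Cons v vs)
  then obtain b t' where t: "t = b # t'" "length t' = length vs"
    by (cases t) auto
  have v: "v \<in> bvecs n" and vs: "set vs \<subseteq> bvecs n" and iso: "isotropic n Q vs"
    using Cons.prems unfolding isotropic_def by auto
  let ?L = "lincomb n vs t'"
  let ?A = "if b then v else bzero n"
  have L: "?L \<in> bvecs n"
    using vs t(2) by simp
  have A: "?A \<in> bvecs n"
    using v by simp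
  have "polar_form n Q ?L v = bdot t' (map (\<lambda>y. polar_form n Q y v) vs)"
    using blinear_lincomb[OF blinear_polar_form[OF v] vs t(2)] .
  also have "\<dots> = False"
    using Cons.prems(1) unfolding isotropic_def by (intro bdot_all_False) auto
  finally have "polar_form n Q v ?L = False"
    by (simp add: polar_form_comm)
  then have orth: "polar_form n Q ?A ?L = False"
    using polar_form_bzero[of n Q ?L] polar_form_comm[of n Q "bzero n" ?L] by auto
  show ?case
    unfolding t lincomb_Cons
    using lin_form_bxor[OF A L, of l] quad_form_bxor[OF A L, of Q] orth
      Cons.IH[OF iso vs t(2)] by (cases b) auto
qed

subsection \<open>Isotropic subspaces of half dimension\<close>

text \<open>The 2k linear conditions (polar-orthogonal to vs, zero at the pivots) cut Z_I down by
  a factor of at most 2^(2k), so a nonzero solution survives as long as 2k < card I.\<close>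

lemma exists_orthogonal_pivot_free:
  assumes I: "I \<subseteq> {..<n}" and piv: "has_pivots n vs ps" and vsZ: "set vs \<subseteq> Z_I n I"
    and card: "2 * length vs < card I"
  obtains x p where "x \<in> Z_I n I" "p < n" "x ! p" "\<forall>v\<in>set vs. \<not> polar_form n Q x v"
    "\<forall>q\<in>set ps. \<not> x ! q"
proof -
  have Zb: "Z_I n I \<subseteq> bvecs n"
    using bsubspace_Z_I unfolding bsubspace_def by blast
  define fs where "fs = map (\<lambda>v x. polar_form n Q x v) vs @ map (\<lambda>p x. x ! p) ps"
  have lin: "\<forall>f\<in>set fs. blinear n f"
  proof
    fix f assume "f \<in> set fs"
    then consider v where "v \<in> set vs" "f = (\<lambda>x. polar_form n Q x v)"
      | q where "q \<in> set ps" "f = (\<lambda>x. x ! q)"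
      unfolding fs_def by auto
    then show "blinear n f"
    proof cases
      case 1
      then show ?thesis using vsZ Zb by (simp add: blinear_polar_form subset_iff)
    next
      case 2
      then show ?thesis using piv unfolding has_pivots_def by (simp add: blinear_nth)
    qed
  qed
  have "length fs = 2 * length vs"
    using piv unfolding fs_def has_pivots_def by simp
  then have "2 ^ length fs < card (Z_I n I)"
    using card card_Z_I[OF I] by simp
  then obtain x p where x: "x \<in> Z_I n I" "\<forall>f\<in>set fs. \<not> f x" "p < n" "x ! p"
    by (rule exists_nonzero_joint_kernel[OF bsubspace_Z_I lin])
  moreover have "\<forall>v\<in>set vs. \<not> polar_form n Q x v" "\<forall>q\<in>set ps. \<not> x ! q"
    using x(2) unfolding fs_def by auto
  ultimately show ?thesis
    using that by blast
qed

lemma isotropic_Cons_reduce: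
  fixes x :: "bool list" and p :: nat
  defines "red \<equiv> \<lambda>v. if v ! p then bxor v x else v"
  assumes iso: "isotropic n Q vs" and vsb: "set vs \<subseteq> bvecs n" and xb: "x \<in> bvecs n"
    and orth_x: "\<forall>v\<in>set vs. \<not> polar_form n Q x v"
  shows "isotropic n Q (x # map red vs)"
proof -
  have red_True: "red v = bxor v x" if "v ! p" for v
    using that unfolding red_def by simp
  have red_False: "red v = v" if "\<not> v ! p" for v
    using that unfolding red_def by simp
  have redb: "red v \<in> bvecs n" if "v \<in> set vs" for v
    using that vsb xb red_True red_False by (cases "v ! p") auto
  have orth: "\<not> polar_form n Q a b" if "a \<in> set (x # vs)" "b \<in> set (x # vs)" for a b
  proof -
    have "\<not> polar_form n Q v x" if "v \<in> set vs" for v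
      using orth_x that polar_form_comm[of n Q x v] by auto
    then show ?thesis
      using that iso orth_x unfolding isotropic_def by auto
  qed
  have polar_red: "polar_form n Q (red v) b = (polar_form n Q v b \<noteq> (v ! p \<and> polar_form n Q x b))"
    if "v \<in> set vs" "b \<in> bvecs n" for v b
    using that vsb xb red_True red_False by (cases "v ! p") (auto simp: polar_form_bxor_left)
  have orth_red: "\<not> polar_form n Q (red v) b" if "v \<in> set vs" "b \<in> set (x # vs)" for v b
    using that polar_red orth xb vsb by auto
  have orth_red_red: "\<not> polar_form n Q (red v) (red w)" if "v \<in> set vs" "w \<in> set vs" for v w
  proof -
    have "\<not> polar_form n Q (red v) w" "\<not> polar_form n Q (red v) x"
      using orth_red that by auto
    then have "\<not> polar_form n Q w (red v)" "\<not> polar_form n Q x (red v)"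
      by (simp_all add: polar_form_comm)
    then have "\<not> polar_form n Q (red w) (red v)"
      using polar_red[OF that(2) redb[OF that(1)]] by simp
    then show ?thesis
      by (simp add: polar_form_comm)
  qed
  show ?thesis
    unfolding isotropic_def
  proof (intro ballI)
    fix a b assume a: "a \<in> set (x # map red vs)" and b: "b \<in> set (x # map red vs)"
    have "\<not> polar_form n Q x (red w)" if "w \<in> set vs" for w
      using orth_red[OF that, of x] by (simp add: polar_form_comm)
    then show "\<not> polar_form n Q a b"
      using a b orth_red orth_red_red by auto
  qed
qed

lemma has_pivots_Cons_reduce:
  fixes x :: "bool list" and p :: nat
  defines "red \<equiv> \<lambda>v. if v ! p then bxor v x else v"
  assumes piv: "has_pivots n vs ps" and xb: "x \<in> bvecs n"
    and x: "p < n" "x ! p" "\<forall>q\<in>set ps. \<not> x ! q"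
  shows "has_pivots n (x # map red vs) (p # ps)"
proof -
  have len: "length ps = length vs" and vsb: "set vs \<subseteq> bvecs n" and psn: "\<forall>q\<in>set ps. q < n"
    and unit: "\<forall>i<length vs. \<forall>j<length vs. vs ! i ! (ps ! j) = (i = j)"
    using piv unfolding has_pivots_def by auto
  have red_nth: "red v ! q = (v ! q \<noteq> (v ! p \<and> x ! q))" if "v \<in> set vs" "q < n" for v q
    using that vsb xb unfolding red_def by auto
  show ?thesis
    unfolding has_pivots_def
  proof (intro conjI allI impI)
    show "length (p # ps) = length (x # map red vs)" "\<forall>q\<in>set (p # ps). q < n"
      using len psn x(1) by auto
    show "set (x # map red vs) \<subseteq> bvecs n"
      using xb vsb unfolding red_def by auto
    fix i j assume i: "i < length (x # map red vs)" and j: "j < length (x # map red vs)"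
    show "(x # map red vs) ! i ! ((p # ps) ! j) = (i = j)"
    proof (cases i)
      case 0
      then show ?thesis
        using j x(2,3) len by (cases j) auto
    next
      case (Suc i')
      then have i': "i' < length vs" "vs ! i' \<in> set vs"
        using i by auto
      show ?thesis
      proof (cases j)
        case 0
        then show ?thesis
          using Suc i' red_nth[of "vs ! i'" p] x(1,2) by simp
      next
        case (Suc j')
        then have j': "j' < length vs" "ps ! j' \<in> set ps"
          using j len by auto
        then show ?thesis
          using \<open>i = Suc i'\<close> Suc i' red_nth[of "vs ! i'" "ps ! j'"] unit psn x(3) by simp
      qed
    qed
  qed
qed

lemma exists_isotropic_pivots:
  assumes I: "I \<subseteq> {..<n}"
  shows "2 * m \<le> card I + 1 \<Longrightarrow>
    \<exists>vs ps. length vs = m \<and> has_pivots n vs ps \<and> isotropic n Q vs \<and> set vs \<subseteq> Z_I n I"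
proof (induction m)
  case 0
  then show ?case by (auto simp: has_pivots_def isotropic_def)
next
  case (Suc m)
  then obtain vs ps where vs: "length vs = m" "has_pivots n vs ps" "isotropic n Q vs" "set vs \<subseteq> Z_I n I"
    by auto
  obtain x p where x: "x \<in> Z_I n I" "p < n" "x ! p" "\<forall>v\<in>set vs. \<not> polar_form n Q x v"
    "\<forall>q\<in>set ps. \<not> x ! q"
    using exists_orthogonal_pivot_free[OF I vs(2,4)] Suc.prems vs(1) by auto
  define red where "red = (\<lambda>v. if v ! p then bxor v x else v)"
  have Zb: "Z_I n I \<subseteq> bvecs n" and Z: "bsubspace n (Z_I n I)"
    using bsubspace_Z_I unfolding bsubspace_def by blast+
  have xb: "x \<in> bvecs n" and vsb: "set vs \<subseteq> bvecs n"
    using x(1) vs(4) Zb by auto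
  have "has_pivots n (x # map red vs) (p # ps)"
    unfolding red_def by (rule has_pivots_Cons_reduce[OF vs(2) xb x(2,3,5)])
  moreover have "isotropic n Q (x # map red vs)"
    unfolding red_def by (rule isotropic_Cons_reduce[OF vs(3) vsb xb x(4)])
  moreover have "red v \<in> Z_I n I" if "v \<in> set vs" for v
    using that vs(4) x(1) Z unfolding bsubspace_def red_def by auto
  then have "set (x # map red vs) \<subseteq> Z_I n I"
    using x(1) by auto
  moreover have "length (x # map red vs) = Suc m"
    using vs(1) by simp
  ultimately show ?case
    by blast
qed

lemma quad_poly_linear_on_subspace:
  assumes I: "I \<subseteq> {..<n}"
    and q: "\<And>z. z \<in> Z_I n I \<Longrightarrow> q z = (c0 \<noteq> (lin_form n l z \<noteq> quad_form n Q z))"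
    and q0: "q (bzero n) = False"
  obtains V vs k where "bsubspace n V" "V \<subseteq> Z_I n I" "is_basis n V vs" "(card I + 1) div 2 \<le> length vs"
    "k \<in> bvecs n" "\<And>z. z \<in> V \<Longrightarrow> q z = bdot k z"
proof -
  define g where "g z = (lin_form n l z \<noteq> quad_form n Q z)" for z
  have "bzero n \<in> Z_I n I"
    by (simp add: Z_I_def)
  with q q0 have c0: "c0 = False"
    by simp
  have "2 * ((card I + 1) div 2) \<le> card I + 1"
    by simp
  then obtain vs ps where vs: "length vs = (card I + 1) div 2" "has_pivots n vs ps" "isotropic n Q vs"
    "set vs \<subseteq> Z_I n I"
    using exists_isotropic_pivots[OF I, of _ Q] by blast
  have vsb: "set vs \<subseteq> bvecs n"
    using vs(2) unfolding has_pivots_def by simp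
  obtain k where k: "k \<in> bvecs n" "\<And>j. j < length vs \<Longrightarrow> bdot k (vs ! j) = g (vs ! j)"
    using exists_bdot_pivots[OF vs(2), of "\<lambda>j. g (vs ! j)"] by blast
  define V where "V = lincomb n vs ` bvecs (length vs)"
  have VZ: "V \<subseteq> Z_I n I"
    unfolding V_def using lincomb_in_bsubspace[OF bsubspace_Z_I vs(4)] by auto
  have linear: "q z = bdot k z" if "z \<in> V" for z
  proof -
    obtain t where t: "t \<in> bvecs (length vs)" "z = lincomb n vs t"
      using \<open>z \<in> V\<close> unfolding V_def by blast
    have "z \<in> Z_I n I"
      using VZ that by blast
    then have "q z = g z"
      using q c0 unfolding g_def by simp
    also have "\<dots> = bdot t (map g vs)"
      unfolding t(2) g_def using quad_poly_lincomb_isotropic[OF vs(3) vsb] t(1) by simp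
    also have "map g vs = map (bdot k) vs"
      using k(2) by (simp add: list_eq_iff_nth_eq)
    also have "bdot t (map (bdot k) vs) = bdot k z"
      unfolding t(2) using blinear_lincomb[OF blinear_bdot vsb] k(1) t(1) by simp
    finally show ?thesis .
  qed
  show ?thesis
  proof (rule that)
    show "bsubspace n V" "is_basis n V vs"
      using is_basis_pivots[OF vs(2)] unfolding V_def by blast+
  qed (use VZ k(1) vs(1) linear in simp_all)
qed

lemma mtrace_mult:
  assumes "A \<in> carrier_mat N M" "B \<in> carrier_mat M N"
  shows "mtrace (A * B) = (\<Sum>i<N. \<Sum>k<M. A $$ (i, k) * B $$ (k, i))"
  unfolding mtrace_def using assms by (auto simp: scalar_prod_def atLeast0LessThan intro!: sum.cong)

lemma mtrace_comm:
  assumes "A \<in> carrier_mat N M" "B \<in> carrier_mat M N"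
  shows "mtrace (A * B) = mtrace (B * A)"
  using mtrace_mult[OF assms] mtrace_mult[OF assms(2,1)]
  by (simp add: sum.swap[of _ "{..<N}"] mult.commute)

lemma mtrace_smult: "A \<in> carrier_mat N N \<Longrightarrow> mtrace (c \<cdot>\<^sub>m A) = c * mtrace A"
  unfolding mtrace_def by (simp add: sum_distrib_left)

lemma unitary_adjoint:
  assumes "unitary n U"
  shows "mat_adjoint U \<in> carrier_mat (2 ^ n) (2 ^ n)" "mat_adjoint U * U = 1\<^sub>m (2 ^ n)"
proof -
  have U: "U \<in> carrier_mat (2 ^ n) (2 ^ n)" and UU: "U * mat_adjoint U = 1\<^sub>m (2 ^ n)"
    using assms unfolding unitary_def by auto
  show Ud: "mat_adjoint U \<in> carrier_mat (2 ^ n) (2 ^ n)"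
    using U unfolding mat_adjoint_def
    by (metis carrier_matD(1) carrier_matD(2) length_map mat_of_rows_carrier(1) cols_length)
  show "mat_adjoint U * U = 1\<^sub>m (2 ^ n)"
    by (rule mat_mult_left_right_inverse[OF U Ud UU])
qed

lemma mtrace_conj_mult:
  assumes U: "U \<in> carrier_mat N N" and Ud: "Ud \<in> carrier_mat N N" and inv: "Ud * U = 1\<^sub>m N"
    and R: "R \<in> carrier_mat N N" and T: "T \<in> carrier_mat N N"
  shows "mtrace ((U * R * Ud) * (U * T * Ud)) = mtrace (R * T)"
proof -
  have "(U * R * Ud) * (U * T * Ud) = U * (R * (Ud * U) * T * Ud)"
    using U Ud R T by (simp add: assoc_mult_mat[of _ N N _ N _ N])
  also have "\<dots> = U * (R * T * Ud)"
    using inv R T Ud by simp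
  finally have "mtrace ((U * R * Ud) * (U * T * Ud)) = mtrace (U * (R * T * Ud))"
    by simp
  also have "\<dots> = mtrace ((R * T * Ud) * U)"
    using U R T Ud by (intro mtrace_comm) auto
  also have "(R * T * Ud) * U = R * T"
    using U R T Ud inv by (simp add: assoc_mult_mat[of _ N N _ N _ N])
  finally show ?thesis .
qed

lemma pauliT_carrier: "pauliT n a \<in> carrier_mat (2 ^ n) (2 ^ n)"
  unfolding pauliT_def by simp

lemma phase_point_op_carrier: "phase_point_op n F u \<in> carrier_mat (2 ^ n) (2 ^ n)"
  unfolding phase_point_op_def by simp

lemma idx_Cons: "idx (b # y) = (if b then 2 ^ length y else 0) + idx y"
proof -
  have shift: "Suc (length y) - 1 - Suc i = length y - 1 - i" for i
    by arith
  show ?thesis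
    unfolding idx_def length_Cons sum.lessThan_Suc_shift
    by (simp, intro sum.cong refl) (simp only: shift)
qed

lemma idx_less: "idx y < 2 ^ length y"
proof (induction y)
  case Nil
  then show ?case by (simp add: idx_def)
next
  case (Cons b y)
  then show ?case by (simp add: idx_Cons)
qed

lemma bit_idx: "p < length y \<Longrightarrow> bit (idx y) p = y ! (length y - 1 - p)"
proof (induction y arbitrary: p)
  case Nil
  then show ?case by simp
next
  case (Cons b y)
  let ?L = "length y"
  show ?case
  proof (cases "p = ?L")
    case True
    have "idx (b # y) div 2 ^ ?L = (if b then 1 else 0)"
      using idx_less[of y] by (simp add: idx_Cons div_add_self1)
    then show ?thesis
      using True by (simp add: bit_iff_odd)
  next
    case False
    then have p: "p < ?L"
      using Cons.prems by simp
    have "(2::nat) ^ p dvd 2 ^ ?L"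
      using p by (simp add: le_imp_power_dvd)
    then have "idx (b # y) div 2 ^ p = (if b then 2 ^ ?L div 2 ^ p else 0) + idx y div 2 ^ p"
      by (auto simp: idx_Cons div_plus_div_distrib_dvd_left)
    moreover have "even ((2::nat) ^ ?L div 2 ^ p)"
      using p by (simp add: power_diff[symmetric])
    ultimately have "bit (idx (b # y)) p = bit (idx y) p"
      by (auto simp: bit_iff_odd)
    moreover have "(b # y) ! (length (b # y) - 1 - p) = y ! (?L - 1 - p)"
      using p by (simp add: Suc_diff_Suc)
    ultimately show ?thesis
      using Cons.IH[OF p] by simp
  qed
qed

lemma qbit_idx: "length y = n \<Longrightarrow> j < n \<Longrightarrow> qbit n (idx y) j = (if y ! j then 1 else 0)"
proof -
  assume "length y = n" "j < n"
  then have "n - 1 - (n - 1 - j) = j" "n - 1 - j < length y"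
    by arith+
  then have "bit (idx y) (n - 1 - j) = y ! j"
    using bit_idx \<open>length y = n\<close> by metis
  then show ?thesis
    unfolding qbit_def by simp
qed

lemma qbit_less: "qbit n r j < 2"
  by (simp add: qbit_def)

lemma bij_betw_idx: "bij_betw idx (bvecs n) {..<2 ^ n}"
proof -
  have inj: "inj_on idx (bvecs n)"
  proof (rule inj_onI)
    fix y y' assume y: "y \<in> bvecs n" and y': "y' \<in> bvecs n" and eq: "idx y = idx y'"
    show "y = y'"
    proof (rule nth_equalityI)
      show "length y = length y'"
        using y y' by simp
      fix j assume "j < length y"
      then have "(if y ! j then 1 else 0 :: nat) = (if y' ! j then 1 else 0)"
        using qbit_idx[of y n j] qbit_idx[of y' n j] y y' eq by simp
      then show "y ! j = y' ! j"
        by (cases "y ! j"; cases "y' ! j") auto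
    qed
  qed
  moreover have "idx ` bvecs n \<subseteq> {..<2 ^ n}"
    using idx_less by auto
  moreover have "card (idx ` bvecs n) = card {..<(2::nat) ^ n}"
    using card_image[OF inj] card_bvecs by simp
  ultimately show ?thesis
    by (simp add: bij_betw_def card_subset_eq)
qed

lemma sum_lessThan_idx: "(\<Sum>r<2 ^ n. f r) = (\<Sum>y\<in>bvecs n. f (idx y))"
  using sum.reindex_bij_betw[OF bij_betw_idx, of f] by simp

lemma prod_sgn1: "(\<Prod>j<(n::nat). sgn1 (f j)) = sgn1 (odd (card {j. j < n \<and> f j}))"
proof (induction n)
  case 0
  then show ?case by simp
next
  case (Suc n)
  show ?case
  proof (cases "f n")
    case True
    then have "{j. j < Suc n \<and> f j} = insert n {j. j < n \<and> f j}" by auto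
    then show ?thesis using Suc True by (simp add: sgn1_def)
  next
    case False
    then have "{j. j < Suc n \<and> f j} = {j. j < n \<and> f j}" using less_Suc_eq by auto
    then show ?thesis using Suc False by simp
  qed
qed

lemma pauli1_False_nth:
  assumes "a < 2" "b < 2"
  shows "pauli1 False z $$ (a, b) = (if a = b then sgn1 (z \<and> a = 1) else 0)"
proof -
  have Z: "pauliZ \<in> carrier_mat 2 2"
    unfolding pauliZ_def mat_of_rows_list_def carrier_mat_def by (simp add: numeral_2_eq_2)
  then have "pauli1 False z $$ (a, b) = (if z then pauliZ else 1\<^sub>m 2) $$ (a, b)"
    unfolding pauli1_def using assms by auto
  moreover have "a = 0 \<or> a = 1" "b = 0 \<or> b = 1"
    using assms by auto
  ultimately show ?thesis
    by (auto simp: pauliZ_def mat_of_rows_list_def)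
qed

lemma pauliT_Z_idx:
  assumes y: "y \<in> bvecs n" and y': "y' \<in> bvecs n" and z: "z \<in> bvecs n"
  shows "pauliT n (bzero n, z) $$ (idx y', idx y) = (if y' = y then sgn1 (bdot y z) else 0)"
proof -
  have r: "idx y < 2 ^ n" "idx y' < 2 ^ n"
    using idx_less y y' by (metis mem_bvecs_iff)+
  have "pauliT n (bzero n, z) $$ (idx y', idx y) = (\<Prod>j<n. if y' ! j = y ! j then sgn1 (z ! j \<and> y ! j) else 0)"
    unfolding pauliT_def using r
  proof (simp, intro prod.cong refl)
    fix j assume j: "j \<in> {..<n}"
    then have "qbit n (idx y') j = (if y' ! j then 1 else 0)" "qbit n (idx y) j = (if y ! j then 1 else 0)"
      using qbit_idx y y' by auto
    then show "pauli1 False (z ! j) $$ (qbit n (idx y') j, qbit n (idx y) j)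
        = (if y' ! j = y ! j then sgn1 (z ! j \<and> y ! j) else 0)"
      using pauli1_False_nth[of "qbit n (idx y') j" "qbit n (idx y) j" "z ! j", OF qbit_less qbit_less] by auto
  qed
  also have "\<dots> = (if y' = y then sgn1 (bdot y z) else 0)"
  proof (cases "y' = y")
    case True
    have "{j. j < n \<and> z ! j \<and> y ! j} = {i. i < length y \<and> i < length z \<and> y ! i \<and> z ! i}"
      using y z by auto
    then show ?thesis
      using True prod_sgn1[of "\<lambda>j. z ! j \<and> y ! j" n] unfolding bdot_def by simp
  next
    case False
    then obtain j where "j < n" "y' ! j \<noteq> y ! j"
      using y y' nth_equalityI[of y' y] by auto
    then show ?thesis
      using False by (intro trans[OF prod_zero]) auto
  qed
  finally show ?thesis .
qed

lemma mtrace_mult_pauliT_Z: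
  assumes X: "X \<in> carrier_mat (2 ^ n) (2 ^ n)" and z: "z \<in> bvecs n"
  shows "mtrace (X * pauliT n (bzero n, z)) = (\<Sum>y\<in>bvecs n. X $$ (idx y, idx y) * sgn1 (bdot y z))"
proof -
  have "mtrace (X * pauliT n (bzero n, z))
      = (\<Sum>y\<in>bvecs n. \<Sum>y'\<in>bvecs n. X $$ (idx y, idx y') * pauliT n (bzero n, z) $$ (idx y', idx y))"
    by (simp add: mtrace_mult[OF X pauliT_carrier] sum_lessThan_idx)
  also have "\<dots> = (\<Sum>y\<in>bvecs n. \<Sum>y'\<in>bvecs n. if y' = y then X $$ (idx y, idx y) * sgn1 (bdot y z) else 0)"
    using pauliT_Z_idx[OF _ _ z] by (intro sum.cong refl) auto
  finally show ?thesis
    by (simp add: sum.delta)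
qed

subsection \<open>Fourier analysis of affine constraints\<close>

lemma indicator_constraints_fourier:
  assumes vs: "set vs \<subseteq> bvecs n" and c: "c \<in> bvecs (length vs)" and w: "w \<in> bvecs n"
  shows "(of_bool (\<forall>j<length vs. bdot (vs ! j) w = c ! j) :: complex)
    = (1 / 2 ^ length vs) * (\<Sum>t\<in>bvecs (length vs). sgn1 (bdot (lincomb n vs t) w \<noteq> bdot t c))"
proof -
  let ?m = "length vs"
  let ?e = "bxor (map (\<lambda>v. bdot v w) vs) c"
  have e: "?e \<in> bvecs ?m"
    using c by simp
  have "(\<forall>j<?m. bdot (vs ! j) w = c ! j) \<longleftrightarrow> map (\<lambda>v. bdot v w) vs = c"
    using c by (auto simp: list_eq_iff_nth_eq)
  also have "\<dots> \<longleftrightarrow> ?e = bzero ?m"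
    using bxor_eq_bzero_iff[of "map (\<lambda>v. bdot v w) vs" c] c by simp
  finally have "(of_bool (\<forall>j<?m. bdot (vs ! j) w = c ! j) :: complex)
      = (1 / 2 ^ ?m) * (\<Sum>t\<in>bvecs ?m. sgn1 (bdot t ?e))"
    using sum_sgn1_bdot[OF e] by (simp add: bdot_comm)
  also have "(\<Sum>t\<in>bvecs ?m. sgn1 (bdot t ?e)) = (\<Sum>t\<in>bvecs ?m. sgn1 (bdot (lincomb n vs t) w \<noteq> bdot t c))"
  proof (rule sum.cong[OF refl])
    fix t assume t: "t \<in> bvecs ?m"
    have "bdot t (map (\<lambda>v. bdot v w) vs) = bdot t (map (bdot w) vs)"
      by (rule arg_cong[where f = "bdot t"], rule map_cong[OF refl], rule bdot_comm)
    also have "\<dots> = bdot w (lincomb n vs t)"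
      using blinear_lincomb[OF blinear_bdot vs, of w t] w t by simp
    finally have "bdot t ?e = (bdot (lincomb n vs t) w \<noteq> bdot t c)"
      using c t by (simp add: bdot_bxor bdot_comm)
    then show "sgn1 (bdot t ?e) = sgn1 (bdot (lincomb n vs t) w \<noteq> bdot t c)"
      by simp
  qed
  finally show ?thesis .
qed

text \<open>A sum over the solutions of the affine system v_j . (y + k) = c_j only sees the
  Fourier coefficients of the summand on the span of the v_j.\<close>

lemma sum_affine_constraints_fourier:
  fixes h :: "bool list \<Rightarrow> complex"
  assumes vs: "set vs \<subseteq> bvecs n" and c: "c \<in> bvecs (length vs)" and k: "k \<in> bvecs n"
  shows "(\<Sum>y\<in>{y\<in>bvecs n. \<forall>j<length vs. bdot (vs ! j) (bxor y k) = c ! j}. h y)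
    = (1 / 2 ^ length vs) * (\<Sum>t\<in>bvecs (length vs). sgn1 (bdot (lincomb n vs t) k \<noteq> bdot t c) *
         (\<Sum>y\<in>bvecs n. sgn1 (bdot (lincomb n vs t) y) * h y))"
proof -
  let ?m = "length vs"
  let ?L = "lincomb n vs"
  have L: "?L t \<in> bvecs n" if "t \<in> bvecs ?m" for t
    using that vs by simp
  have "(\<Sum>y\<in>{y\<in>bvecs n. \<forall>j<?m. bdot (vs ! j) (bxor y k) = c ! j}. h y)
      = (\<Sum>y\<in>bvecs n. of_bool (\<forall>j<?m. bdot (vs ! j) (bxor y k) = c ! j) * h y)"
    by (simp add: Int_def conj_commute)
  also have "\<dots> = (\<Sum>y\<in>bvecs n. (1 / 2 ^ ?m) *
      (\<Sum>t\<in>bvecs ?m. sgn1 (bdot (?L t) y) * sgn1 (bdot (?L t) k \<noteq> bdot t c)) * h y)"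
  proof (rule sum.cong[OF refl])
    fix y assume y: "y \<in> bvecs n"
    have "sgn1 (bdot (?L t) (bxor y k) \<noteq> bdot t c) = sgn1 (bdot (?L t) y) * sgn1 (bdot (?L t) k \<noteq> bdot t c)"
      if "t \<in> bvecs ?m" for t
      using L[OF that] y k by (simp add: bdot_bxor sgn1_def)
    then show "of_bool (\<forall>j<?m. bdot (vs ! j) (bxor y k) = c ! j) * h y
        = (1 / 2 ^ ?m) * (\<Sum>t\<in>bvecs ?m. sgn1 (bdot (?L t) y) * sgn1 (bdot (?L t) k \<noteq> bdot t c)) * h y"
      using indicator_constraints_fourier[OF vs c, of "bxor y k"] y k by simp
  qed
  also have "\<dots> = (1 / 2 ^ ?m) * (\<Sum>y\<in>bvecs n. \<Sum>t\<in>bvecs ?m.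
      sgn1 (bdot (?L t) k \<noteq> bdot t c) * (sgn1 (bdot (?L t) y) * h y))"
    by (simp add: sum_distrib_left sum_distrib_right ac_simps)
  also have "\<dots> = (1 / 2 ^ ?m) * (\<Sum>t\<in>bvecs ?m. \<Sum>y\<in>bvecs n.
      sgn1 (bdot (?L t) k \<noteq> bdot t c) * (sgn1 (bdot (?L t) y) * h y))"
    by (subst sum.swap) (rule refl)
  also have "\<dots> = (1 / 2 ^ ?m) * (\<Sum>t\<in>bvecs ?m. sgn1 (bdot (?L t) k \<noteq> bdot t c) *
         (\<Sum>y\<in>bvecs n. sgn1 (bdot (?L t) y) * h y))"
    by (simp add: sum_distrib_left)
  finally show ?thesis .
qed

lemma fourier_inversion:
  fixes f :: "bool list \<Rightarrow> complex"
  assumes "z \<in> bvecs n"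
  shows "(\<Sum>x\<in>bvecs n. sgn1 (bdot z x) * (\<Sum>z'\<in>bvecs n. sgn1 (bdot x z') * f z')) = 2 ^ n * f z"
proof -
  have "(\<Sum>x\<in>bvecs n. sgn1 (bdot z x) * (\<Sum>z'\<in>bvecs n. sgn1 (bdot x z') * f z'))
      = (\<Sum>x\<in>bvecs n. \<Sum>z'\<in>bvecs n. sgn1 (bdot x z) * sgn1 (bdot x z') * f z')"
    by (simp add: sum_distrib_left bdot_comm[of z] mult.assoc)
  also have "\<dots> = (\<Sum>z'\<in>bvecs n. \<Sum>x\<in>bvecs n. sgn1 (bdot x z) * sgn1 (bdot x z') * f z')"
    by (rule sum.swap)
  also have "\<dots> = (\<Sum>z'\<in>bvecs n. (\<Sum>x\<in>bvecs n. sgn1 (bdot x z) * sgn1 (bdot x z')) * f z')"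
    by (simp add: sum_distrib_right)
  also have "\<dots> = (\<Sum>z'\<in>bvecs n. if z = z' then 2 ^ n * f z' else 0)"
    using assms by (intro sum.cong refl) (simp add: sum_sgn1_bdot_orthogonal)
  finally show ?thesis
    using assms by (simp add: sum.delta)
qed

subsection \<open>Clifford covariance of framed Wigner functions\<close>

definition clifford_frame :: "nat \<Rightarrow> (point \<Rightarrow> point) \<Rightarrow> (point \<Rightarrow> bool) \<Rightarrow> (point \<Rightarrow> bool) \<Rightarrow> point \<Rightarrow> bool" where
  "clifford_frame n S F P b = (let a = inv_into (pts n) S b in F a \<noteq> P a)"

lemma wigner_eq_sum_mtrace:
  assumes R: "\<rho> \<in> carrier_mat (2 ^ n) (2 ^ n)"
  shows "wigner n F \<rho> u = (1 / 2 ^ n) * (1 / 2 ^ n) *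
     (\<Sum>a\<in>pts n. sgn1 (symp u a \<noteq> F a) * mtrace (\<rho> * pauliT n a))"
proof -
  let ?N = "2 ^ n :: nat"
  let ?g = "\<lambda>a. sgn1 (symp u a \<noteq> F a)"
  have "mtrace (\<rho> * phase_point_op n F u) = (\<Sum>i<?N. \<Sum>k<?N. \<rho> $$ (i, k) * phase_point_op n F u $$ (k, i))"
    by (rule mtrace_mult[OF R phase_point_op_carrier])
  also have "\<dots> = (\<Sum>i<?N. \<Sum>k<?N. \<Sum>a\<in>pts n. (1 / 2 ^ n) * (?g a * (\<rho> $$ (i, k) * pauliT n a $$ (k, i))))"
    unfolding phase_point_op_def by (intro sum.cong refl) (simp add: sum_distrib_left ac_simps)
  also have "\<dots> = (\<Sum>i<?N. \<Sum>a\<in>pts n. \<Sum>k<?N. (1 / 2 ^ n) * (?g a * (\<rho> $$ (i, k) * pauliT n a $$ (k, i))))"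
    by (intro sum.cong refl sum.swap)
  also have "\<dots> = (\<Sum>a\<in>pts n. \<Sum>i<?N. \<Sum>k<?N. (1 / 2 ^ n) * (?g a * (\<rho> $$ (i, k) * pauliT n a $$ (k, i))))"
    by (rule sum.swap)
  also have "\<dots> = (1 / 2 ^ n) * (\<Sum>a\<in>pts n. ?g a * mtrace (\<rho> * pauliT n a))"
    by (simp add: sum_distrib_left mtrace_mult[OF R pauliT_carrier])
  finally show ?thesis
    unfolding wigner_def by simp
qed

lemma mtrace_pauliT_clifford:
  assumes cd: "clifford_data n U S P" and R: "\<rho> \<in> carrier_mat (2 ^ n) (2 ^ n)" and a: "a \<in> pts n"
  shows "mtrace (\<rho> * pauliT n a) = sgn1 (P a) * mtrace ((U * \<rho> * mat_adjoint U) * pauliT n (S a))"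
proof -
  have U: "U \<in> carrier_mat (2 ^ n) (2 ^ n)" and un: "unitary n U"
    using cd unfolding clifford_data_def unitary_def by auto
  note Ud = unitary_adjoint[OF un]
  have conj: "U * pauliT n a * mat_adjoint U = sgn1 (P a) \<cdot>\<^sub>m pauliT n (S a)"
    using cd a unfolding clifford_data_def by auto
  have sigma: "U * \<rho> * mat_adjoint U \<in> carrier_mat (2 ^ n) (2 ^ n)"
    using U Ud(1) R by auto
  have "mtrace (\<rho> * pauliT n a) = mtrace ((U * \<rho> * mat_adjoint U) * (U * pauliT n a * mat_adjoint U))"
    by (rule mtrace_conj_mult[OF U Ud R pauliT_carrier, symmetric])
  also have "\<dots> = mtrace (sgn1 (P a) \<cdot>\<^sub>m ((U * \<rho> * mat_adjoint U) * pauliT n (S a)))"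
    unfolding conj mult_smult_distrib[OF sigma pauliT_carrier] ..
  also have "\<dots> = sgn1 (P a) * mtrace ((U * \<rho> * mat_adjoint U) * pauliT n (S a))"
    by (rule mtrace_smult[OF mult_carrier_mat[OF sigma pauliT_carrier]])
  finally show ?thesis .
qed

lemma wigner_clifford:
  assumes cd: "clifford_data n U S P" and R: "\<rho> \<in> carrier_mat (2 ^ n) (2 ^ n)" and u: "u \<in> pts n"
  shows "wigner n F \<rho> u = wigner n (clifford_frame n S F P) (U * \<rho> * mat_adjoint U) (S u)"
proof -
  let ?\<sigma> = "U * \<rho> * mat_adjoint U"
  let ?h = "\<lambda>b. sgn1 (symp (S u) b \<noteq> clifford_frame n S F P b) * mtrace (?\<sigma> * pauliT n b)"
  have bij: "bij_betw S (pts n) (pts n)"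
    using cd unfolding clifford_data_def by auto
  have U: "U \<in> carrier_mat (2 ^ n) (2 ^ n)"
    using cd unfolding clifford_data_def unitary_def by auto
  have "unitary n U"
    using cd unfolding clifford_data_def by simp
  then have sigma: "?\<sigma> \<in> carrier_mat (2 ^ n) (2 ^ n)"
    using U unitary_adjoint(1)[OF \<open>unitary n U\<close>] R by auto
  have "sgn1 (symp u a \<noteq> F a) * mtrace (\<rho> * pauliT n a) = ?h (S a)" if a: "a \<in> pts n" for a
  proof -
    have "symp (S u) (S a) = symp u a"
      using cd u a unfolding clifford_data_def by auto
    moreover have "clifford_frame n S F P (S a) = (F a \<noteq> P a)"
      using bij_betw_inv_into_left[OF bij a] unfolding clifford_frame_def by simp
    ultimately show ?thesis
      unfolding mtrace_pauliT_clifford[OF cd R a] by (simp add: sgn1_def)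
  qed
  then have "(\<Sum>a\<in>pts n. sgn1 (symp u a \<noteq> F a) * mtrace (\<rho> * pauliT n a)) = (\<Sum>a\<in>pts n. ?h (S a))"
    by (rule sum.cong[OF refl])
  also have "\<dots> = (\<Sum>b\<in>pts n. ?h b)"
    by (rule sum.reindex_bij_betw[OF bij])
  finally show ?thesis
    unfolding wigner_eq_sum_mtrace[OF R] wigner_eq_sum_mtrace[OF sigma] by simp
qed

lemma clifford_fixes_pzero:
  assumes "clifford_data n U S P"
  shows "S (pzero n) = pzero n"
proof -
  have p0: "pzero n \<in> pts n"
    by (simp add: pzero_def pts_def)
  have "S (pxor (pzero n) (pzero n)) = pxor (S (pzero n)) (S (pzero n))"
    using assms p0 unfolding clifford_data_def by blast
  moreover have "S (pzero n) \<in> pts n"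
    using assms p0 unfolding clifford_data_def by (meson bij_betwE)
  moreover have "pxor a a = pzero n" if "a \<in> pts n" for a
    using that unfolding pxor_def pzero_def pts_def by (auto simp: bxor_self)
  ultimately show ?thesis
    using p0 by metis
qed

text \<open>Conjugation by U preserves the trace, and T_0 = 1 has nonzero trace.\<close>

lemma clifford_phase_pzero:
  assumes cd: "clifford_data n U S P"
  shows "P (pzero n) = False"
proof -
  let ?N = "2 ^ n :: nat"
  let ?T = "pauliT n (bzero n, bzero n)"
  have un: "unitary n U" and U: "U \<in> carrier_mat ?N ?N" and UU: "U * mat_adjoint U = 1\<^sub>m ?N"
    using cd unfolding clifford_data_def unitary_def by auto
  note Ud = unitary_adjoint[OF un]
  have one: "1\<^sub>m ?N \<in> carrier_mat ?N ?N"
    by simp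
  have "U * ?T * mat_adjoint U = sgn1 (P (pzero n)) \<cdot>\<^sub>m ?T"
    using cd clifford_fixes_pzero[OF cd] unfolding clifford_data_def pzero_def pts_def by auto
  moreover have "mtrace ((U * 1\<^sub>m ?N * mat_adjoint U) * (U * ?T * mat_adjoint U)) = mtrace (1\<^sub>m ?N * ?T)"
    by (rule mtrace_conj_mult[OF U Ud one pauliT_carrier])
  moreover have "U * 1\<^sub>m ?N * mat_adjoint U = 1\<^sub>m ?N"
    using U UU by simp
  ultimately have "sgn1 (P (pzero n)) * mtrace (1\<^sub>m ?N * ?T) = mtrace (1\<^sub>m ?N * ?T)"
    using mult_smult_distrib[OF one pauliT_carrier] mtrace_smult[OF mult_carrier_mat[OF one pauliT_carrier]]
    by metis
  moreover have "mtrace (1\<^sub>m ?N * ?T) = 2 ^ n"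
  proof -
    have "mtrace (1\<^sub>m ?N * ?T) = (\<Sum>y\<in>bvecs n. 1\<^sub>m ?N $$ (idx y, idx y) * sgn1 (bdot y (bzero n)))"
      by (rule mtrace_mult_pauliT_Z[OF one]) simp
    also have "\<dots> = (\<Sum>y\<in>bvecs n. 1)"
    proof (rule sum.cong[OF refl])
      fix y assume "y \<in> bvecs n"
      then have "idx y < ?N"
        using idx_less[of y] by simp
      then show "1\<^sub>m ?N $$ (idx y, idx y) * sgn1 (bdot y (bzero n)) = 1"
        by simp
    qed
    finally show ?thesis
      by (simp add: card_bvecs)
  qed
  ultimately show ?thesis
    by (cases "P (pzero n)") simp_all
qed

lemma clifford_frame_pzero:
  assumes "clifford_data n U S P" "frame_function n F"
  shows "clifford_frame n S F P (pzero n) = False"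
proof -
  have "bij_betw S (pts n) (pts n)"
    using assms(1) unfolding clifford_data_def by auto
  moreover have "pzero n \<in> pts n"
    by (simp add: pzero_def pts_def)
  ultimately have "inv_into (pts n) S (pzero n) = pzero n"
    using clifford_fixes_pzero[OF assms(1)] bij_betw_inv_into_left by fastforce
  then show ?thesis
    using assms clifford_phase_pzero unfolding clifford_frame_def frame_function_def by simp
qed

lemma sum_pts: "(\<Sum>b\<in>pts n. f b) = (\<Sum>x\<in>bvecs n. \<Sum>z\<in>bvecs n. f (x, z))"
  unfolding pts_def by (simp add: sum.cartesian_product)

lemma sum_pts_filter_fst:
  "(\<Sum>w\<in>{w\<in>pts n. C (fst w)}. f w) = (\<Sum>x\<in>{x\<in>bvecs n. C x}. \<Sum>z\<in>bvecs n. f (x, z))"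
proof -
  have "{w\<in>pts n. C (fst w)} = {x\<in>bvecs n. C x} \<times> bvecs n"
    unfolding pts_def by auto
  then show ?thesis
    by (simp add: sum.cartesian_product)
qed

text \<open>Summing out w_z kills every Pauli operator with a nonzero X-part, leaving the
  Fourier transform of the diagonal (Z-type) part.\<close>

lemma sum_wigner_snd:
  assumes R: "\<rho> \<in> carrier_mat (2 ^ n) (2 ^ n)"
  shows "(\<Sum>wz\<in>bvecs n. wigner n G \<rho> (wx, wz)) = (1 / 2 ^ n) *
    (\<Sum>bz\<in>bvecs n. sgn1 (bdot wx bz) * (sgn1 (G (bzero n, bz)) * mtrace (\<rho> * pauliT n (bzero n, bz))))"
proof -
  let ?c = "(1 / 2 ^ n) * (1 / 2 ^ n) :: complex"
  let ?R = "\<lambda>bx bz. sgn1 (bdot wx bz) * (sgn1 (G (bx, bz)) * mtrace (\<rho> * pauliT n (bx, bz)))"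
  have sgn: "sgn1 ((a \<noteq> b) \<noteq> g) * x = sgn1 b * (sgn1 a * (sgn1 g * x))" for a b g and x :: complex
    by (simp add: sgn1_def)
  have "(\<Sum>wz\<in>bvecs n. wigner n G \<rho> (wx, wz))
     = (\<Sum>wz\<in>bvecs n. ?c * (\<Sum>bx\<in>bvecs n. \<Sum>bz\<in>bvecs n. sgn1 (bdot wz bx) * ?R bx bz))"
    unfolding wigner_eq_sum_mtrace[OF R] sum_pts symp_def fst_conv snd_conv sgn ..
  also have "\<dots> = ?c * (\<Sum>wz\<in>bvecs n. \<Sum>bx\<in>bvecs n. \<Sum>bz\<in>bvecs n. sgn1 (bdot wz bx) * ?R bx bz)"
    by (simp only: sum_distrib_left)
  also have "(\<Sum>wz\<in>bvecs n. \<Sum>bx\<in>bvecs n. \<Sum>bz\<in>bvecs n. sgn1 (bdot wz bx) * ?R bx bz)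
      = (\<Sum>bx\<in>bvecs n. \<Sum>wz\<in>bvecs n. \<Sum>bz\<in>bvecs n. sgn1 (bdot wz bx) * ?R bx bz)"
    by (rule sum.swap)
  also have "\<dots> = (\<Sum>bx\<in>bvecs n. \<Sum>bz\<in>bvecs n. \<Sum>wz\<in>bvecs n. sgn1 (bdot wz bx) * ?R bx bz)"
    by (intro sum.cong refl sum.swap)
  also have "\<dots> = (\<Sum>bx\<in>bvecs n. \<Sum>bz\<in>bvecs n. (\<Sum>wz\<in>bvecs n. sgn1 (bdot wz bx)) * ?R bx bz)"
    by (simp only: sum_distrib_right)
  also have "\<dots> = (\<Sum>bx\<in>bvecs n. if bx = bzero n then (\<Sum>bz\<in>bvecs n. 2 ^ n * ?R bx bz) else 0)"
    by (intro sum.cong refl) (simp add: sum_sgn1_bdot)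
  also have "\<dots> = (\<Sum>bz\<in>bvecs n. 2 ^ n * ?R (bzero n) bz)"
    by (simp add: sum.delta)
  finally show ?thesis
    by (simp add: sum_distrib_left[symmetric])
qed

lemma sum_wigner_affine_constraints:
  assumes R: "\<rho> \<in> carrier_mat (2 ^ n) (2 ^ n)" and vs: "set vs \<subseteq> bvecs n"
    and c: "c \<in> bvecs (length vs)" and k: "k \<in> bvecs n"
    and G: "\<And>t. t \<in> bvecs (length vs) \<Longrightarrow> G (bzero n, lincomb n vs t) = bdot k (lincomb n vs t)"
  shows "(\<Sum>w\<in>{w\<in>pts n. \<forall>j<length vs. bdot (vs ! j) (bxor (fst w) k) = c ! j}. wigner n G \<rho> w)
       = (\<Sum>y\<in>{y\<in>bvecs n. \<forall>j<length vs. bdot (vs ! j) y = c ! j}. \<rho> $$ (idx y, idx y))"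
proof -
  let ?m = "length vs"
  let ?L = "lincomb n vs"
  let ?\<chi> = "\<lambda>z. mtrace (\<rho> * pauliT n (bzero n, z))"
  let ?f = "\<lambda>z. sgn1 (G (bzero n, z)) * ?\<chi> z"
  let ?M = "\<lambda>x. (1 / 2 ^ n) * (\<Sum>z\<in>bvecs n. sgn1 (bdot x z) * ?f z)"
  let ?C = "\<lambda>x. \<forall>j<?m. bdot (vs ! j) (bxor x k) = c ! j"
  have L: "?L t \<in> bvecs n" if "t \<in> bvecs ?m" for t
    using that vs by simp
  have "(\<Sum>w\<in>{w\<in>pts n. \<forall>j<?m. bdot (vs ! j) (bxor (fst w) k) = c ! j}. wigner n G \<rho> w)
      = (\<Sum>x\<in>{x\<in>bvecs n. ?C x}. \<Sum>z\<in>bvecs n. wigner n G \<rho> (x, z))"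
    by (rule sum_pts_filter_fst[where C = ?C])
  also have "\<dots> = (\<Sum>x\<in>{x\<in>bvecs n. ?C x}. ?M x)"
    by (simp only: sum_wigner_snd[OF R])
  also have "\<dots> = (1 / 2 ^ ?m) * (\<Sum>t\<in>bvecs ?m. sgn1 (bdot (?L t) k \<noteq> bdot t c) *
      (\<Sum>x\<in>bvecs n. sgn1 (bdot (?L t) x) * ?M x))"
    by (rule sum_affine_constraints_fourier[OF vs c k])
  also have "\<dots> = (1 / 2 ^ ?m) * (\<Sum>t\<in>bvecs ?m. sgn1 (bdot t c) * ?\<chi> (?L t))"
  proof (intro arg_cong[where f = "\<lambda>x. (1 / 2 ^ ?m) * x"] sum.cong refl)
    fix t assume t: "t \<in> bvecs ?m"
    have "(\<Sum>x\<in>bvecs n. sgn1 (bdot (?L t) x) * ?M x)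
        = (1 / 2 ^ n) * (\<Sum>x\<in>bvecs n. sgn1 (bdot (?L t) x) * (\<Sum>z\<in>bvecs n. sgn1 (bdot x z) * ?f z))"
      by (simp add: sum_distrib_left ac_simps)
    also have "\<dots> = ?f (?L t)"
      using fourier_inversion[OF L[OF t], of ?f] by simp
    finally show "sgn1 (bdot (?L t) k \<noteq> bdot t c) * (\<Sum>x\<in>bvecs n. sgn1 (bdot (?L t) x) * ?M x)
        = sgn1 (bdot t c) * ?\<chi> (?L t)"
      using G[OF t] by (simp add: sgn1_def bdot_comm[of k])
  qed
  also have "\<dots> = (1 / 2 ^ ?m) * (\<Sum>t\<in>bvecs ?m. sgn1 (bdot (?L t) (bzero n) \<noteq> bdot t c) *
      (\<Sum>y\<in>bvecs n. sgn1 (bdot (?L t) y) * \<rho> $$ (idx y, idx y)))"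
  proof (intro arg_cong[where f = "\<lambda>x. (1 / 2 ^ ?m) * x"] sum.cong refl)
    fix t assume t: "t \<in> bvecs ?m"
    have "?\<chi> (?L t) = (\<Sum>y\<in>bvecs n. sgn1 (bdot (?L t) y) * \<rho> $$ (idx y, idx y))"
      unfolding mtrace_mult_pauliT_Z[OF R L[OF t]] by (intro sum.cong refl) (simp add: bdot_comm)
    then show "sgn1 (bdot t c) * ?\<chi> (?L t) = sgn1 (bdot (?L t) (bzero n) \<noteq> bdot t c) *
      (\<Sum>y\<in>bvecs n. sgn1 (bdot (?L t) y) * \<rho> $$ (idx y, idx y))"
      by simp
  qed
  also have "\<dots> = (\<Sum>y\<in>{y\<in>bvecs n. \<forall>j<?m. bdot (vs ! j) (bxor y (bzero n)) = c ! j}. \<rho> $$ (idx y, idx y))"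
    by (rule sum_affine_constraints_fourier[OF vs c, symmetric]) simp
  also have "{y\<in>bvecs n. \<forall>j<?m. bdot (vs ! j) (bxor y (bzero n)) = c ! j}
      = {y\<in>bvecs n. \<forall>j<?m. bdot (vs ! j) y = c ! j}"
    by (auto simp: bxor_bzero)
  finally show ?thesis .
qed

lemma sum_bij_betw_filter:
  assumes "bij_betw S A A"
  shows "(\<Sum>u\<in>{u\<in>A. C (S u)}. f (S u)) = (\<Sum>w\<in>{w\<in>A. C w}. f w)"
proof (rule sum.reindex_bij_betw)
  show "bij_betw S {u\<in>A. C (S u)} {w\<in>A. C w}"
  proof (rule bij_betw_imageI)
    show "inj_on S {u\<in>A. C (S u)}"
      using bij_betw_imp_inj_on[OF assms] by (rule inj_on_subset) blast
    show "S ` {u\<in>A. C (S u)} = {w\<in>A. C w}"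
    proof (rule Set.set_eqI)
      fix w
      show "w \<in> S ` {u\<in>A. C (S u)} \<longleftrightarrow> w \<in> {w\<in>A. C w}"
      proof
        assume "w \<in> S ` {u\<in>A. C (S u)}"
        then show "w \<in> {w\<in>A. C w}"
          using bij_betwE[OF assms] by blast
      next
        assume w: "w \<in> {w\<in>A. C w}"
        then obtain u where "u \<in> A" "w = S u"
          using bij_betw_imp_surj_on[OF assms] by blast
        then show "w \<in> S ` {u\<in>A. C (S u)}"
          using w by blast
      qed
    qed
  qed
qed

lemma sum_outcome_prob_eq_sum_wigner:
  assumes cd: "clifford_data n U S P" and R: "\<rho> \<in> carrier_mat (2 ^ n) (2 ^ n)"
    and V: "bsubspace n V" and vs: "is_basis n V vs" and c: "c \<in> bvecs (length vs)" and k: "k \<in> bvecs n"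
    and lin: "\<And>z. z \<in> V \<Longrightarrow> clifford_frame n S F P (bzero n, z) = bdot k z"
  shows "(\<Sum>y\<in>{y\<in>bvecs n. \<forall>j<length vs. bdot (vs ! j) y = c ! j}. outcome_prob n U \<rho> y)
      = (\<Sum>u\<in>{u\<in>pts n. \<forall>j<length vs. bdot (vs ! j) (bxor (fst (S u)) k) = c ! j}. wigner n F \<rho> u)"
proof -
  let ?F' = "clifford_frame n S F P"
  let ?\<sigma> = "U * \<rho> * mat_adjoint U"
  let ?C = "\<lambda>x. \<forall>j<length vs. bdot (vs ! j) (bxor x k) = c ! j"
  have "unitary n U" and bij: "bij_betw S (pts n) (pts n)"
    using cd unfolding clifford_data_def by simp_all
  then have "U \<in> carrier_mat (2 ^ n) (2 ^ n)" "mat_adjoint U \<in> carrier_mat (2 ^ n) (2 ^ n)"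
    using unitary_adjoint(1) unfolding unitary_def by blast+
  then have \<sigma>: "?\<sigma> \<in> carrier_mat (2 ^ n) (2 ^ n)"
    using R by auto
  have "set vs \<subseteq> V" and span: "\<And>t. t \<in> bvecs (length vs) \<Longrightarrow> lincomb n vs t \<in> V"
    using vs bij_betwE unfolding is_basis_def by blast+
  then have vsb: "set vs \<subseteq> bvecs n"
    using V unfolding bsubspace_def by blast
  have "(\<Sum>u\<in>{u\<in>pts n. ?C (fst (S u))}. wigner n F \<rho> u)
      = (\<Sum>u\<in>{u\<in>pts n. ?C (fst (S u))}. wigner n ?F' ?\<sigma> (S u))"
    using wigner_clifford[OF cd R] by (intro sum.cong refl) simp
  also have "\<dots> = (\<Sum>w\<in>{w\<in>pts n. ?C (fst w)}. wigner n ?F' ?\<sigma> w)"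
    by (rule sum_bij_betw_filter[OF bij, where C = "\<lambda>w. ?C (fst w)"])
  also have "\<dots> = (\<Sum>y\<in>{y\<in>bvecs n. \<forall>j<length vs. bdot (vs ! j) y = c ! j}. ?\<sigma> $$ (idx y, idx y))"
    by (rule sum_wigner_affine_constraints[OF \<sigma> vsb c k]) (rule lin[OF span])
  finally show ?thesis
    unfolding outcome_prob_def by simp
qed

theorem theorem1:
  fixes n :: nat and F P :: "point \<Rightarrow> bool" and S :: "point \<Rightarrow> point"
    and \<rho> U :: "complex mat" and I :: "nat set"
  assumes "n \<ge> 1"
    and "density_matrix n \<rho>"
    and "frame_function n F"
    and "positively_represented n F \<rho>"
    and "clifford_data n U S P"
    and "I \<subseteq> {..<n}"
    and "bool_poly_deg_le2_on n (Z_I n I)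
           (\<lambda>az. let a = inv_into (pts n) S (bzero n, az) in F a \<noteq> P a)"
  shows "\<exists>V k. bsubspace n V \<and> V \<subseteq> Z_I n I \<and>
           (\<exists>vs. is_basis n V vs \<and> length vs \<ge> (card I + 1) div 2) \<and>
           k \<in> bvecs n \<and>
           (\<forall>az\<in>V. (let a = inv_into (pts n) S (bzero n, az) in F a \<noteq> P a) = bdot k az) \<and>
           (\<forall>vs c. is_basis n V vs \<longrightarrow> c \<in> bvecs (length vs) \<longrightarrow>
              (\<Sum>y \<in> {y\<in>bvecs n. \<forall>j<length vs. bdot (vs ! j) y = c ! j}. outcome_prob n U \<rho> y)
              = (\<Sum>u \<in> {u\<in>pts n. \<forall>j<length vs. bdot (vs ! j) (bxor (fst (S u)) k) = c ! j}.
                   wigner n F \<rho> u))"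
proof -
  let ?F' = "clifford_frame n S F P"
  have R: "\<rho> \<in> carrier_mat (2 ^ n) (2 ^ n)"
    using assms(2) unfolding density_matrix_def by simp
  obtain c0 l Q where poly: "\<And>z. z \<in> Z_I n I \<Longrightarrow> ?F' (bzero n, z) = (c0 \<noteq> (lin_form n l z \<noteq> quad_form n Q z))"
    using bool_poly_deg_le2_onE[OF assms(7)] unfolding clifford_frame_def by blast
  have zero: "?F' (bzero n, bzero n) = False"
    using clifford_frame_pzero[OF assms(5,3)] by (simp add: pzero_def)
  obtain V vs0 k where V: "bsubspace n V" "V \<subseteq> Z_I n I" "is_basis n V vs0"
    "(card I + 1) div 2 \<le> length vs0" "k \<in> bvecs n" "\<And>z. z \<in> V \<Longrightarrow> ?F' (bzero n, z) = bdot k z"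
    using quad_poly_linear_on_subspace[OF assms(6) poly zero] by blast
  show ?thesis
  proof (rule exI[of _ V], rule exI[of _ k], intro conjI)
    show "\<exists>vs. is_basis n V vs \<and> (card I + 1) div 2 \<le> length vs"
      using V(3,4) by blast
    show "\<forall>az\<in>V. (let a = inv_into (pts n) S (bzero n, az) in F a \<noteq> P a) = bdot k az"
      using V(6) unfolding clifford_frame_def by blast
  qed (use V(1,2,5) sum_outcome_prob_eq_sum_wigner[OF assms(5) R V(1) _ _ V(5,6)] in blast)+
qed

end
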